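(* Let $\rho$ be a density matrix of rank two on the $N$-qubit space $H=(\mathbb{C}^2)^{\otimes N}$. Let $|\tilde 0\rangle,|\tilde 1\rangle$ be an orthonormal basis of the support (range) of $\rho$, and define operators on $H$ $$\tau_1=|\tilde 0\rangle\langle\tilde 1|+|\tilde 1\rangle\langle\tilde 0|,\quad \tau_2=-i|\tilde 0\rangle\langle\tilde 1|+i|\tilde 1\rangle\langle\tilde 0|,\quad \tau_3=|\tilde 0\rangle\langle\tilde 0|-|\tilde 1\rangle\langle\tilde 1|.$$ Let $W$ be the real symmetric $3\times 3$ matrix with entries $W_{ij}=\mathrm{Tr}\big(\mathcal{S}\,(\tau_i\otimes\tau_j)\big)$, $i,j\in\{1,2,3\}$, and let $w_{\min}$ be its smallest eigenvalue. Then $$\mathcal{E}(\rho)=\mathcal{C}(\rho)+\tfrac12\big(1-\mathrm{Tr}(\rho^2)\big)\,w_{\min}.$$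
   Context: Let $\sigma_1,\sigma_2,\sigma_3$ be the Pauli matrices and $\sigma_0=\mathbb{I}$. For an $N$-qubit state $\rho$ put $T_{\mu_1\dots\mu_N}=\mathrm{Tr}(\rho\,\sigma_{\mu_1}\otimes\dots\otimes\sigma_{\mu_N})$ and define the length of correlations $\mathcal{C}(\rho)=\sum_{j_1,\dots,j_N=1}^{3}T_{j_1\dots j_N}^2$; for a pure state $|\Psi\rangle$ write $\mathcal{C}(\Psi)=\mathcal{C}(|\Psi\rangle\langle\Psi|)$. Consider two copies $H\otimes H$ of the $N$-qubit space, where qubit $n$ of the first copy is paired with qubit $n'$ of the second copy, and define the operator $\mathcal{S}=\bigotimes_{n=1}^{N}\Big(\sum_{j=1}^{3}\sigma_j^{(n)}\otimes\sigma_j^{(n')}\Big)$ on $H\otimes H$; then $\mathcal{C}(\rho)=\mathrm{Tr}\big((\rho\otimes\rho)\,\mathcal{S}\big)$. The convex-roof extension is $\mathcal{E}(\rho)=\min\sum_k\mu_k\,\mathcal{C}(\Psi_k)$, the minimum taken over all pure-state decompositions $\rho=\sum_k\mu_k|\Psi_k\rangle\langle\Psi_k|$ with $\mu_k>0$, $\sum_k\mu_k=1$ and unit vectors $|\Psi_k\rangle$. *)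

theory Defs
  imports "Jordan_Normal_Form.Char_Poly" "Jordan_Normal_Form.DL_Rank"
begin

definition mtrace :: "'a::comm_ring_1 mat \<Rightarrow> 'a" where
  "mtrace A = (\<Sum>i<dim_row A. A $$ (i,i))"

text \<open>Kronecker (tensor) product, standard ordering: index i of A \<otimes> B is
  (i div dim B, i mod dim B).\<close>
definition kron :: "complex mat \<Rightarrow> complex mat \<Rightarrow> complex mat" where
  "kron A B = mat (dim_row A * dim_row B) (dim_col A * dim_col B)
     (\<lambda>(i,j). A $$ (i div dim_row B, j div dim_col B) * B $$ (i mod dim_row B, j mod dim_col B))"

definition ketbra :: "complex vec \<Rightarrow> complex vec \<Rightarrow> complex mat" where
  "ketbra u v = mat (dim_vec u) (dim_vec v) (\<lambda>(i,j). u $ i * cnj (v $ j))"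

definition pauli :: "nat \<Rightarrow> complex mat" where
  "pauli j = (if j = 1 then mat_of_rows_list 2 [[0, 1], [1, 0]]
         else if j = 2 then mat_of_rows_list 2 [[0, - \<i>], [\<i>, 0]]
         else if j = 3 then mat_of_rows_list 2 [[1, 0], [0, -1]]
         else 1\<^sub>m 2)"

fun pauli_string :: "nat \<Rightarrow> (nat \<Rightarrow> nat) \<Rightarrow> complex mat" where
  "pauli_string 0 \<mu> = 1\<^sub>m 1"
| "pauli_string (Suc n) \<mu> = kron (pauli_string n \<mu>) (pauli (\<mu> n))"

text \<open>Local (qubit n) index of the computational basis index a in the N-qubit
  space, consistent with the ordering of pauli_string.\<close>
definition qubit_idx :: "nat \<Rightarrow> nat \<Rightarrow> nat \<Rightarrow> nat" where
  "qubit_idx N a n = (a div 2 ^ (N - 1 - n)) mod 2"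

definition corr_T :: "nat \<Rightarrow> complex mat \<Rightarrow> (nat \<Rightarrow> nat) \<Rightarrow> complex" where
  "corr_T N \<rho> \<mu> = mtrace (\<rho> * pauli_string N \<mu>)"

text \<open>C(rho) = sum over j_1..j_N in {1,2,3} of T_{j_1...j_N}^2 (T is real for Hermitian rho).\<close>
definition length_corr :: "nat \<Rightarrow> complex mat \<Rightarrow> real" where
  "length_corr N \<rho> = (\<Sum>j \<in> {0..<N} \<rightarrow>\<^sub>E {1,2,3}. (Re (corr_T N \<rho> j))\<^sup>2)"

text \<open>The operator S on H \<otimes> H (dimension 2^N * 2^N, index (a,b) = a * 2^N + b, a for
  the first copy, b for the second), S = \<Otimes>_n (\<Sum>_{j=1}^3 sigma_j^(n) \<otimes> sigma_j^(n')),
  qubit n of the first copy paired with qubit n' of the second copy.\<close>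
definition S_op :: "nat \<Rightarrow> complex mat" where
  "S_op N = mat (2 ^ N * 2 ^ N) (2 ^ N * 2 ^ N) (\<lambda>(i,j).
     \<Prod>n<N. \<Sum>k\<in>{1,2,3::nat}.
        pauli k $$ (qubit_idx N (i div 2 ^ N) n, qubit_idx N (j div 2 ^ N) n)
      * pauli k $$ (qubit_idx N (i mod 2 ^ N) n, qubit_idx N (j mod 2 ^ N) n))"

definition density_matrix :: "nat \<Rightarrow> complex mat \<Rightarrow> bool" where
  "density_matrix N \<rho> \<longleftrightarrow> \<rho> \<in> carrier_mat (2 ^ N) (2 ^ N)
     \<and> (\<forall>i < 2 ^ N. \<forall>j < 2 ^ N. \<rho> $$ (j, i) = cnj (\<rho> $$ (i, j)))
     \<and> (\<forall>v \<in> carrier_vec (2 ^ N). Im ((\<rho> *\<^sub>v v) \<bullet>c v) = 0 \<and> Re ((\<rho> *\<^sub>v v) \<bullet>c v) \<ge> 0)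
     \<and> mtrace \<rho> = 1"

definition convex_roof :: "nat \<Rightarrow> complex mat \<Rightarrow> real" where
  "convex_roof N \<rho> = Inf {(\<Sum>k<(m::nat). \<mu> k * length_corr N (ketbra (\<Psi> k) (\<Psi> k))) | m \<mu> \<Psi>.
      (\<forall>k<m. \<mu> k > 0 \<and> \<Psi> k \<in> carrier_vec (2 ^ N) \<and> \<Psi> k \<bullet>c \<Psi> k = 1)
    \<and> (\<Sum>k<m. \<mu> k) = 1
    \<and> \<rho> = mat (2 ^ N) (2 ^ N) (\<lambda>(i,j). \<Sum>k<m. complex_of_real (\<mu> k) * (\<Psi> k $ i) * cnj (\<Psi> k $ j))}"

definition tau_op :: "complex vec \<Rightarrow> complex vec \<Rightarrow> nat \<Rightarrow> complex mat" where
  "tau_op v0 v1 i = (if i = 1 then ketbra v0 v1 + ketbra v1 v0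
                  else if i = 2 then (- \<i>) \<cdot>\<^sub>m ketbra v0 v1 + \<i> \<cdot>\<^sub>m ketbra v1 v0
                  else ketbra v0 v0 - ketbra v1 v1)"

text \<open>W_{ij} = Tr(S (tau_i \<otimes> tau_j)), i,j = 1..3 (stored at 0-based positions i-1, j-1);
  the entries are real, W is regarded as a real 3x3 matrix.\<close>
definition W_mat :: "nat \<Rightarrow> complex vec \<Rightarrow> complex vec \<Rightarrow> real mat" where
  "W_mat N v0 v1 = mat 3 3 (\<lambda>(i,j).
     Re (mtrace (S_op N * kron (tau_op v0 v1 (i+1)) (tau_op v0 v1 (j+1)))))"

definition min_eigenvalue :: "real mat \<Rightarrow> real" where
  "min_eigenvalue A = Min {w. eigenvalue A w}"

end

theory Submission
  imports Defs "HOL-Analysis.Elementary_Metric_Spaces" "HOL-Analysis.Euclidean_Space"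
begin

(* Since the range of rho is spanned by v0, v1, every pure state of a decomposition of rho lies in
   that span, so every operator involved is (I + x1 sigma1 + x2 sigma2 + x3 sigma3) / 2 written in
   the basis v0, v1, for a Bloch vector x in R^3: a unit vector n_k for each pure state and the
   average r = sum_k mu_k n_k for rho.  Each correlation T_j is affine in the Bloch vector,
   T_j = (P_j + <t_j, x>) / 2 with t_j = (T_j(tau_1), T_j(tau_2), T_j(tau_3)), and
   Tr(S (A (x) B)) = sum_j T_j(A) T_j(B) shows that W is the Gram matrix of the t_j.  Hence

     sum_k mu_k C(n_k) = C(r) + 1/4 sum_k mu_k (n_k - r)^T W (n_k - r)
                      >= C(r) + 1/4 w_min sum_k mu_k |n_k - r|^2 = C(r) + 1/4 w_min (1 - |r|^2),

   and 1 - |r|^2 = 2 (1 - Tr rho^2).  Equality holds for the two pure states where the line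
   through r along an eigenvector of w_min meets the unit sphere. *)

section \<open>Finite sums and traces\<close>

lemma sum_lessThan_2: "(\<Sum>p<2. f p) = f 0 + f (1::nat)"
  by (simp add: numeral_2_eq_2)

lemma sum_lessThan_3: "(\<Sum>i<3. f i) = f 0 + f 1 + f (2::nat)"
  by (simp add: numeral_3_eq_3 numeral_2_eq_2)

lemma sum_lessThan_mult_split:
  fixes f :: "nat \<Rightarrow> 'a::comm_monoid_add"
  shows "(\<Sum>i<m * d. f i) = (\<Sum>a<m. \<Sum>b<d. f (a * d + b))"
proof -
  have "(\<Sum>i<m * d. f i) = (\<Sum>a<m. \<Sum>i\<in>{a * d..<a * d + d}. f i)"
    using sum.nat_group[of f d m] by simp
  also have "\<dots> = (\<Sum>a<m. \<Sum>b<d. f (a * d + b))"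
    by (simp add: sum.atLeastLessThan_shift_0 atLeast0LessThan add.commute)
  finally show ?thesis .
qed

lemma sum_swap_two:
  "(\<Sum>i\<in>I. \<Sum>l\<in>L. \<Sum>k\<in>K. F i l k) = (\<Sum>k\<in>K. \<Sum>i\<in>I. \<Sum>l\<in>L. F i l k)"
proof -
  have "(\<Sum>i\<in>I. \<Sum>l\<in>L. \<Sum>k\<in>K. F i l k) = (\<Sum>i\<in>I. \<Sum>k\<in>K. \<Sum>l\<in>L. F i l k)"
    by (rule sum.cong[OF refl]) (rule sum.swap)
  also have "\<dots> = (\<Sum>k\<in>K. \<Sum>i\<in>I. \<Sum>l\<in>L. F i l k)"
    by (rule sum.swap)
  finally show ?thesis .
qed

lemma sum_swap_pairs:
  "(\<Sum>i\<in>I. \<Sum>l\<in>L. \<Sum>p\<in>P. \<Sum>q\<in>Q. F i l p q) = (\<Sum>p\<in>P. \<Sum>q\<in>Q. \<Sum>i\<in>I. \<Sum>l\<in>L. F i l p q)"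
proof -
  have "(\<Sum>i\<in>I. \<Sum>l\<in>L. \<Sum>p\<in>P. \<Sum>q\<in>Q. F i l p q) = (\<Sum>p\<in>P. \<Sum>i\<in>I. \<Sum>l\<in>L. \<Sum>q\<in>Q. F i l p q)"
    by (rule sum_swap_two)
  also have "\<dots> = (\<Sum>p\<in>P. \<Sum>q\<in>Q. \<Sum>i\<in>I. \<Sum>l\<in>L. F i l p q)"
    by (rule sum.cong[OF refl]) (rule sum_swap_two)
  finally show ?thesis .
qed

lemma sum_swap_innermost:
  "(\<Sum>a\<in>A. \<Sum>b\<in>B. \<Sum>c\<in>C. \<Sum>d\<in>D. \<Sum>j\<in>J. f a b c d j)
    = (\<Sum>j\<in>J. \<Sum>a\<in>A. \<Sum>b\<in>B. \<Sum>c\<in>C. \<Sum>d\<in>D. f a b c d j)"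
proof -
  have "(\<Sum>a\<in>A. \<Sum>b\<in>B. \<Sum>c\<in>C. \<Sum>d\<in>D. \<Sum>j\<in>J. f a b c d j)
      = (\<Sum>a\<in>A. \<Sum>b\<in>B. \<Sum>j\<in>J. \<Sum>c\<in>C. \<Sum>d\<in>D. f a b c d j)"
    by (rule sum.cong[OF refl])+ (rule sum_swap_two)
  also have "\<dots> = (\<Sum>j\<in>J. \<Sum>a\<in>A. \<Sum>b\<in>B. \<Sum>c\<in>C. \<Sum>d\<in>D. f a b c d j)"
    by (rule sum_swap_two)
  finally show ?thesis .
qed

lemma sum_sandwich:
  fixes c :: "'p \<Rightarrow> 'q \<Rightarrow> 'a::comm_semiring_0"
  shows "(\<Sum>i\<in>I. \<Sum>l\<in>L. f i * (\<Sum>p\<in>P. \<Sum>q\<in>Q. c p q * g p i * h q l) * e l)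
    = (\<Sum>p\<in>P. \<Sum>q\<in>Q. c p q * ((\<Sum>i\<in>I. f i * g p i) * (\<Sum>l\<in>L. h q l * e l)))"
proof -
  have "(\<Sum>i\<in>I. \<Sum>l\<in>L. f i * (\<Sum>p\<in>P. \<Sum>q\<in>Q. c p q * g p i * h q l) * e l)
      = (\<Sum>i\<in>I. \<Sum>l\<in>L. \<Sum>p\<in>P. \<Sum>q\<in>Q. c p q * (f i * g p i * (h q l * e l)))"
    by (simp add: sum_distrib_left sum_distrib_right mult_ac)
  also have "\<dots> = (\<Sum>p\<in>P. \<Sum>q\<in>Q. \<Sum>i\<in>I. \<Sum>l\<in>L. c p q * (f i * g p i * (h q l * e l)))"
    by (rule sum_swap_pairs)
  also have "\<dots> = (\<Sum>p\<in>P. \<Sum>q\<in>Q. c p q * (\<Sum>i\<in>I. \<Sum>l\<in>L. f i * g p i * (h q l * e l)))"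
    by (simp only: sum_distrib_left)
  also have "\<dots> = (\<Sum>p\<in>P. \<Sum>q\<in>Q. c p q * ((\<Sum>i\<in>I. f i * g p i) * (\<Sum>l\<in>L. h q l * e l)))"
    by (simp only: sum_product)
  finally show ?thesis .
qed

lemma cscalar_prod_eq_sum: "w \<in> carrier_vec n \<Longrightarrow> u \<bullet>c w = (\<Sum>i<n. u $ i * cnj (w $ i))"
  unfolding scalar_prod_def by (auto simp: atLeast0LessThan intro!: sum.cong)

lemma mtrace_mult:
  assumes "A \<in> carrier_mat n n" "B \<in> carrier_mat n n"
  shows "mtrace (A * B) = (\<Sum>i<n. \<Sum>l<n. A $$ (i, l) * B $$ (l, i))"
  using assms unfolding mtrace_def
  by (auto simp: scalar_prod_def atLeast0LessThan intro!: sum.cong)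

lemma mixture_quadratic_form:
  assumes x: "x \<in> carrier_vec n" and \<Psi>: "\<And>k. k < m \<Longrightarrow> \<Psi> k \<in> carrier_vec n"
  shows "(mat n n (\<lambda>(i, j). \<Sum>k<m. complex_of_real (\<mu> k) * \<Psi> k $ i * cnj (\<Psi> k $ j)) *\<^sub>v x) \<bullet>c x
    = (\<Sum>k<m. complex_of_real (\<mu> k * (cmod (x \<bullet>c \<Psi> k))\<^sup>2))"
proof -
  have "(mat n n (\<lambda>(i, j). \<Sum>k<m. complex_of_real (\<mu> k) * \<Psi> k $ i * cnj (\<Psi> k $ j)) *\<^sub>v x) \<bullet>c x
      = (\<Sum>i<n. \<Sum>l<n. \<Sum>k<m. complex_of_real (\<mu> k) * ((\<Psi> k $ i * cnj (x $ i)) * (x $ l * cnj (\<Psi> k $ l))))"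
    using x by (simp add: cscalar_prod_eq_sum[of _ n] scalar_prod_def atLeast0LessThan
        sum_distrib_left sum_distrib_right mult_ac)
  also have "\<dots> = (\<Sum>k<m. \<Sum>i<n. \<Sum>l<n. complex_of_real (\<mu> k) * ((\<Psi> k $ i * cnj (x $ i)) * (x $ l * cnj (\<Psi> k $ l))))"
    by (rule sum_swap_two)
  also have "\<dots> = (\<Sum>k<m. complex_of_real (\<mu> k) * ((x \<bullet>c \<Psi> k) * cnj (x \<bullet>c \<Psi> k)))"
    using x \<Psi> by (simp add: cscalar_prod_eq_sum[of _ n] sum_product sum_distrib_left cnj_sum mult_ac)
  also have "\<dots> = (\<Sum>k<m. complex_of_real (\<mu> k * (cmod (x \<bullet>c \<Psi> k))\<^sup>2))"
    by (simp only: complex_norm_square[symmetric] of_real_mult)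
  finally show ?thesis .
qed

lemma mixture_form_zero_imp_orthogonal:
  fixes m :: nat
  assumes A: "A = mat n n (\<lambda>(i, j). \<Sum>k<m. complex_of_real (\<mu> k) * \<Psi> k $ i * cnj (\<Psi> k $ j))"
    and x: "x \<in> carrier_vec n" and \<Psi>: "\<And>k. k < m \<Longrightarrow> \<Psi> k \<in> carrier_vec n"
    and pos: "\<And>k. k < m \<Longrightarrow> \<mu> k > 0" and zero: "(A *\<^sub>v x) \<bullet>c x = 0" and "k0 < m"
  shows "x \<bullet>c \<Psi> k0 = 0"
proof -
  have "(\<Sum>k<m. \<mu> k * (cmod (x \<bullet>c \<Psi> k))\<^sup>2) = 0"
    using zero unfolding A by (simp only: mixture_quadratic_form[OF x \<Psi>] of_real_sum[symmetric] of_real_eq_0_iff)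
  moreover have "0 \<le> \<mu> k * (cmod (x \<bullet>c \<Psi> k))\<^sup>2" if "k \<in> {..<m}" for k
    using pos that by (simp add: less_imp_le)
  ultimately have "\<forall>k\<in>{..<m}. \<mu> k * (cmod (x \<bullet>c \<Psi> k))\<^sup>2 = 0"
    by (subst (asm) sum_nonneg_eq_0_iff) auto
  then show ?thesis
    using \<open>k0 < m\<close> pos[OF \<open>k0 < m\<close>] by force
qed

section \<open>Pauli strings and the operator S\<close>

lemma pauli_carrier [simp]: "pauli k \<in> carrier_mat 2 2"
  unfolding pauli_def by (auto simp: mat_of_rows_list_def)

lemma dim_pauli [simp]: "dim_row (pauli k) = 2" "dim_col (pauli k) = 2"
  using pauli_carrier[of k] by (simp_all only: carrier_mat_def mem_Collect_eq)

lemma dim_kron [simp]: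
  "dim_row (kron A B) = dim_row A * dim_row B" "dim_col (kron A B) = dim_col A * dim_col B"
  unfolding kron_def by auto

lemma dim_pauli_string [simp]:
  "dim_row (pauli_string n \<mu>) = 2 ^ n" "dim_col (pauli_string n \<mu>) = 2 ^ n"
  by (induction n) auto

lemma index_pauli_string:
  assumes "a < 2 ^ n" "b < 2 ^ n"
  shows "pauli_string n \<mu> $$ (a, b) = (\<Prod>m<n. pauli (\<mu> m) $$ (qubit_idx n a m, qubit_idx n b m))"
  using assms
proof (induction n arbitrary: a b)
  case (Suc n)
  have qubit_idx_Suc: "qubit_idx (Suc n) x m = qubit_idx n (x div 2) m" if "m < n" for x m
  proof -
    have "n - m = Suc (n - 1 - m)"
      using that by simp
    then have "x div 2 ^ (n - m) = x div 2 div 2 ^ (n - 1 - m)"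
      by (metis div_mult2_eq power_Suc)
    then show ?thesis
      unfolding qubit_idx_def by simp
  qed
  have "a div 2 < 2 ^ n" "b div 2 < 2 ^ n"
    using Suc.prems by (auto simp: less_mult_imp_div_less)
  then have "pauli_string (Suc n) \<mu> $$ (a, b)
      = (\<Prod>m<n. pauli (\<mu> m) $$ (qubit_idx n (a div 2) m, qubit_idx n (b div 2) m))
        * pauli (\<mu> n) $$ (a mod 2, b mod 2)"
    using Suc.prems by (simp add: kron_def Suc.IH)
  also have "\<dots> = (\<Prod>m<Suc n. pauli (\<mu> m) $$ (qubit_idx (Suc n) a m, qubit_idx (Suc n) b m))"
    by (simp add: qubit_idx_Suc) (simp add: qubit_idx_def)
  finally show ?case .
qed simp

lemma pauli_hermitian: "x < 2 \<Longrightarrow> y < 2 \<Longrightarrow> cnj (pauli k $$ (x, y)) = pauli k $$ (y, x)"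
  unfolding pauli_def by (auto simp: mat_of_rows_list_def less_2_cases_iff)

lemma qubit_idx_less: "qubit_idx N a n < 2"
  unfolding qubit_idx_def by simp

lemma pauli_string_hermitian:
  "a < 2 ^ n \<Longrightarrow> b < 2 ^ n \<Longrightarrow> cnj (pauli_string n \<mu> $$ (a, b)) = pauli_string n \<mu> $$ (b, a)"
  by (simp add: index_pauli_string pauli_hermitian qubit_idx_less)

lemma pair_index_less:
  assumes "a < (d::nat)" "b < d"
  shows "a * d + b < d * d"
proof -
  have "a * d + b < (a + 1) * d"
    using assms by simp
  also have "\<dots> \<le> d * d"
    using assms by (intro mult_le_mono1) simp
  finally show ?thesis .
qed

lemma index_kron_pair:
  assumes "A \<in> carrier_mat d d" "B \<in> carrier_mat d d" "a < d" "b < d" "a' < d" "b' < d"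
  shows "kron A B $$ (a * d + b, a' * d + b') = A $$ (a, a') * B $$ (b, b')"
  using assms pair_index_less[of a d b] pair_index_less[of a' d b'] unfolding kron_def by simp

lemma pauli_string_carrier [simp]: "pauli_string n \<mu> \<in> carrier_mat (2 ^ n) (2 ^ n)"
  by (rule carrier_matI) (simp_all only: dim_pauli_string)

abbreviation pauli_indices :: "nat \<Rightarrow> (nat \<Rightarrow> nat) set" where
  "pauli_indices N \<equiv> {0..<N} \<rightarrow>\<^sub>E {1, 2, 3}"

lemma S_op_index:
  assumes "a < 2 ^ N" "b < 2 ^ N" "a' < 2 ^ N" "b' < 2 ^ N"
  shows "S_op N $$ (a * 2 ^ N + b, a' * 2 ^ N + b')
    = (\<Sum>j\<in>pauli_indices N. pauli_string N j $$ (a, a') * pauli_string N j $$ (b, b'))"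
proof -
  have "S_op N $$ (a * 2 ^ N + b, a' * 2 ^ N + b') = (\<Prod>n<N. \<Sum>k\<in>{1, 2, 3}.
      pauli k $$ (qubit_idx N a n, qubit_idx N a' n) * pauli k $$ (qubit_idx N b n, qubit_idx N b' n))"
    using assms pair_index_less[of a "2 ^ N" b] pair_index_less[of a' "2 ^ N" b'] unfolding S_op_def by simp
  also have "\<dots> = (\<Sum>j\<in>{..<N} \<rightarrow>\<^sub>E {1, 2, 3}. \<Prod>n<N.
      pauli (j n) $$ (qubit_idx N a n, qubit_idx N a' n) * pauli (j n) $$ (qubit_idx N b n, qubit_idx N b' n))"
    by (rule prod_sum_PiE) auto
  also have "\<dots> = (\<Sum>j\<in>pauli_indices N. pauli_string N j $$ (a, a') * pauli_string N j $$ (b, b'))"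
    using assms by (simp add: index_pauli_string prod.distrib lessThan_atLeast0)
  finally show ?thesis .
qed

lemma corr_T_eq_sum:
  assumes "A \<in> carrier_mat (2 ^ N) (2 ^ N)"
  shows "corr_T N A j = (\<Sum>a<2 ^ N. \<Sum>a'<2 ^ N. pauli_string N j $$ (a, a') * A $$ (a', a))"
proof -
  have "corr_T N A j = (\<Sum>a'<2 ^ N. \<Sum>a<2 ^ N. A $$ (a', a) * pauli_string N j $$ (a, a'))"
    unfolding corr_T_def using assms by (intro mtrace_mult) auto
  then show ?thesis
    by (subst sum.swap) (simp add: mult.commute)
qed

lemma mtrace_S_op_kron:
  assumes A: "A \<in> carrier_mat (2 ^ N) (2 ^ N)" and B: "B \<in> carrier_mat (2 ^ N) (2 ^ N)"
  shows "mtrace (S_op N * kron A B) = (\<Sum>j\<in>pauli_indices N. corr_T N A j * corr_T N B j)"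
proof -
  define d :: nat where "d = 2 ^ N"
  have "mtrace (S_op N * kron A B) = (\<Sum>i<d * d. \<Sum>l<d * d. S_op N $$ (i, l) * kron A B $$ (l, i))"
    using A B by (intro mtrace_mult) (auto simp: S_op_def d_def)
  also have "\<dots> = (\<Sum>a<d. \<Sum>b<d. \<Sum>a'<d. \<Sum>b'<d.
      S_op N $$ (a * d + b, a' * d + b') * kron A B $$ (a' * d + b', a * d + b))"
    by (simp only: sum_lessThan_mult_split)
  also have "\<dots> = (\<Sum>a<d. \<Sum>b<d. \<Sum>a'<d. \<Sum>b'<d. \<Sum>j\<in>pauli_indices N.
      (pauli_string N j $$ (a, a') * A $$ (a', a)) * (pauli_string N j $$ (b, b') * B $$ (b', b)))"
    using A B unfolding d_def
    by (intro sum.cong refl) (simp add: S_op_index index_kron_pair sum_distrib_left sum_distrib_right mult_ac)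
  also have "\<dots> = (\<Sum>j\<in>pauli_indices N. \<Sum>a<d. \<Sum>b<d. \<Sum>a'<d. \<Sum>b'<d.
      (pauli_string N j $$ (a, a') * A $$ (a', a)) * (pauli_string N j $$ (b, b') * B $$ (b', b)))"
    by (rule sum_swap_innermost)
  also have "\<dots> = (\<Sum>j\<in>pauli_indices N. corr_T N A j * corr_T N B j)"
    by (simp only: corr_T_eq_sum[OF A] corr_T_eq_sum[OF B] d_def sum_product)
  finally show ?thesis .
qed

section \<open>Bloch vectors\<close>

(* The entries of (I + x1 sigma1 + x2 sigma2 + x3 sigma3) / 2. *)
definition bloch :: "real \<times> real \<times> real \<Rightarrow> nat \<Rightarrow> nat \<Rightarrow> complex" where
  "bloch x p q = (case x of (x1, x2, x3) \<Rightarrow>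
     if p = 0 \<and> q = 0 then Complex ((1 + x3) / 2) 0
     else if p = 0 then Complex (x1 / 2) (- x2 / 2)
     else if q = 0 then Complex (x1 / 2) (x2 / 2)
     else Complex ((1 - x3) / 2) 0)"

definition bloch_vector :: "(nat \<Rightarrow> nat \<Rightarrow> complex) \<Rightarrow> real \<times> real \<times> real" where
  "bloch_vector c = (2 * Re (c 1 0), 2 * Im (c 1 0), Re (c 0 0 - c 1 1))"

lemma bloch_bloch_vector:
  assumes hermitian: "\<And>p q. p < 2 \<Longrightarrow> q < 2 \<Longrightarrow> cnj (c p q) = c q p"
    and trace: "c 0 0 + c 1 1 = 1" and "p < 2" "q < 2"
  shows "bloch (bloch_vector c) p q = c p q"
proof -
  have "Im (c 0 0) = 0" "Im (c 1 1) = 0" "c 0 1 = cnj (c 1 0)"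
    using hermitian[of 0 0] hermitian[of 1 1] hermitian[of 1 0] by (auto simp: complex_eq_iff)
  moreover have "Re (c 0 0) + Re (c 1 1) = 1"
    using arg_cong[OF trace, of Re] by simp
  ultimately show ?thesis
    using \<open>p < 2\<close> \<open>q < 2\<close> by (auto simp: bloch_def bloch_vector_def complex_eq_iff less_2_cases_iff)
qed

lemma bloch_trace: "bloch x 0 0 + bloch x 1 1 = 1"
  by (cases x) (simp add: bloch_def complex_eq_iff field_simps)

lemma sum_bloch_mult_bloch:
  "(\<Sum>p<2. \<Sum>q<2. bloch x p q * bloch y q p) = complex_of_real ((1 + inner x y) / 2)"
  by (cases x; cases y) (simp add: sum_lessThan_2 bloch_def complex_eq_iff field_simps)

lemma bloch_vector_pure_norm:
  assumes "y 0 * cnj (y 0) + y 1 * cnj (y 1) = 1"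
  shows "norm (bloch_vector (\<lambda>p q. y p * cnj (y q))) = 1"
proof -
  let ?c = "\<lambda>p q. y p * cnj (y q)" and ?x = "bloch_vector (\<lambda>p q. y p * cnj (y q))"
  have bloch: "bloch ?x p q = ?c p q" if "p < 2" "q < 2" for p q
    using assms that by (intro bloch_bloch_vector) (auto simp: mult.commute)
  have "complex_of_real ((1 + inner ?x ?x) / 2) = (\<Sum>p<2. \<Sum>q<2. bloch ?x p q * bloch ?x q p)"
    by (rule sum_bloch_mult_bloch[symmetric])
  also have "\<dots> = (\<Sum>p<2. \<Sum>q<2. ?c p q * ?c q p)"
    by (intro sum.cong refl) (simp add: bloch)
  also have "\<dots> = (\<Sum>p<2. ?c p p) * (\<Sum>q<2. ?c q q)"
    by (simp add: sum_product mult_ac)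
  also have "\<dots> = 1"
    using assms by (simp add: sum_lessThan_2)
  finally have "(1 + inner ?x ?x) / 2 = 1"
    by (simp only: of_real_eq_1_iff)
  then show ?thesis
    by (simp add: norm_eq_1)
qed

lemma pure_state_of_bloch:
  assumes "norm x = 1"
  obtains y where "\<And>p q. p < 2 \<Longrightarrow> q < 2 \<Longrightarrow> y p * cnj (y q) = bloch x p q"
proof -
  obtain x1 x2 x3 where x: "x = (x1, x2, x3)"
    by (cases x) auto
  have unit: "x1\<^sup>2 + x2\<^sup>2 + x3\<^sup>2 = 1"
    using assms by (simp add: x norm_eq_1 power2_eq_square)
  show ?thesis
  proof (cases "x3 = -1")
    case True
    then have "x1 = 0" "x2 = 0"
      using unit by (simp_all add: sum_power2_eq_zero_iff)
    with True show ?thesis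
      by (intro that[of "\<lambda>p. if p = 0 then 0 else 1"])
        (auto simp: x bloch_def less_2_cases_iff complex_eq_iff)
  next
    case False
    have "x3\<^sup>2 \<le> 1"
      using unit zero_le_power2[of x1] zero_le_power2[of x2] by linarith
    then have "\<bar>x3\<bar> \<le> 1"
      by (simp add: abs_square_le_1)
    then have "x3 > -1"
      using False by linarith
    define s where "s = sqrt ((1 + x3) / 2)"
    have s: "s > 0" "s\<^sup>2 = (1 + x3) / 2"
      using \<open>x3 > -1\<close> by (simp_all add: s_def)
    \<comment> \<open>the second amplitude is (x1 + i x2) / (2 s), of squared modulus (1 - x3) / 2\<close>
    have "(x1 / (2 * s))\<^sup>2 + (x2 / (2 * s))\<^sup>2 = (x1\<^sup>2 + x2\<^sup>2) / (4 * s\<^sup>2)"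
      by (simp add: power_divide power_mult_distrib add_divide_distrib)
    also have "\<dots> = (1 - x3\<^sup>2) / (4 * s\<^sup>2)"
      using unit by (simp add: algebra_simps)
    also have "\<dots> = (1 - x3) / 2"
      using \<open>x3 > -1\<close> by (simp add: s(2)) (simp add: field_simps power2_eq_square)
    finally have "(x1 / (2 * s))\<^sup>2 + (x2 / (2 * s))\<^sup>2 = (1 - x3) / 2" .
    with s show ?thesis
      by (intro that[of "\<lambda>p. if p = 0 then complex_of_real s else Complex (x1 / (2 * s)) (x2 / (2 * s))"])
        (auto simp: x bloch_def less_2_cases_iff complex_eq_iff power2_eq_square)
  qed
qed

lemma bloch_convex_iff:
  assumes "(\<Sum>k<m. \<mu> k) = 1"
  shows "(\<forall>p<2. \<forall>q<2. bloch r p q = (\<Sum>k<m. complex_of_real (\<mu> k) * bloch (n k) p q))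
    \<longleftrightarrow> r = (\<Sum>k<m. \<mu> k *\<^sub>R n k)"
proof -
  have sums: "(\<Sum>k<m. \<mu> k *\<^sub>R n k) = ((\<Sum>k<m. \<mu> k * fst (n k)), (\<Sum>k<m. \<mu> k * fst (snd (n k))),
      (\<Sum>k<m. \<mu> k * snd (snd (n k))))"
    by (simp add: prod_eq_iff fst_sum snd_sum)
  have bloch_sum: "(\<Sum>k<m. complex_of_real (\<mu> k) * bloch (n k) p q) = bloch (\<Sum>k<m. \<mu> k *\<^sub>R n k) p q"
    for p q
    using assms
    by (simp add: sums bloch_def split_beta complex_eq_iff sum_divide_distrib[symmetric]
        ring_distribs sum.distrib sum_subtractf sum_negf)
  show ?thesis
    unfolding bloch_sum
  proof
    assume "\<forall>p<2. \<forall>q<2. bloch r p q = bloch (\<Sum>k<m. \<mu> k *\<^sub>R n k) p q"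
    then have "bloch r 1 0 = bloch (\<Sum>k<m. \<mu> k *\<^sub>R n k) 1 0" "bloch r 0 0 = bloch (\<Sum>k<m. \<mu> k *\<^sub>R n k) 0 0"
      by auto
    then show "r = (\<Sum>k<m. \<mu> k *\<^sub>R n k)"
      by (cases r; cases "\<Sum>k<m. \<mu> k *\<^sub>R n k") (simp add: bloch_def complex_eq_iff)
  qed simp
qed

section \<open>The Gram form of finitely many vectors in three dimensions\<close>

definition triple_vec :: "real \<times> real \<times> real \<Rightarrow> real vec" where
  "triple_vec x = vec 3 (\<lambda>i. if i = 0 then fst x else if i = 1 then fst (snd x) else snd (snd x))"

definition gram_mat :: "'j set \<Rightarrow> ('j \<Rightarrow> real \<times> real \<times> real) \<Rightarrow> real mat" where
  "gram_mat J t = mat 3 3 (\<lambda>(i, l). \<Sum>j\<in>J. triple_vec (t j) $ i * triple_vec (t j) $ l)"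

definition gram_form :: "'j set \<Rightarrow> ('j \<Rightarrow> real \<times> real \<times> real) \<Rightarrow> real \<times> real \<times> real \<Rightarrow> real" where
  "gram_form J t x = (\<Sum>j\<in>J. (inner (t j) x)\<^sup>2)"

lemma triple_vec_carrier [simp]: "triple_vec x \<in> carrier_vec 3"
  by (simp add: triple_vec_def)

lemma dim_triple_vec [simp]: "dim_vec (triple_vec x) = 3"
  by (simp add: triple_vec_def)

lemma gram_mat_carrier [simp]: "gram_mat J t \<in> carrier_mat 3 3"
  by (simp add: gram_mat_def)

lemma scalar_prod_triple_vec: "triple_vec x \<bullet> triple_vec y = inner x y"
  by (cases x; cases y) (simp add: triple_vec_def scalar_prod_def atLeast0LessThan sum_lessThan_3)

lemma index_triple_vec_sum:
  "i < 3 \<Longrightarrow> triple_vec (\<Sum>j\<in>J. c j *\<^sub>R t j) $ i = (\<Sum>j\<in>J. c j * triple_vec (t j) $ i)"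
  by (simp add: triple_vec_def fst_sum snd_sum)

lemma triple_vec_scaleR: "triple_vec (c *\<^sub>R x) = c \<cdot>\<^sub>v triple_vec x"
  by (auto simp: triple_vec_def)

lemma triple_vec_inject: "triple_vec x = triple_vec y \<longleftrightarrow> x = y"
proof
  assume "triple_vec x = triple_vec y"
  then have "triple_vec x $ i = triple_vec y $ i" for i
    by simp
  from this[of 0] this[of 1] this[of 2] show "x = y"
    by (simp add: triple_vec_def prod_eq_iff)
qed simp

lemma triple_vec_zero_iff: "triple_vec x = 0\<^sub>v 3 \<longleftrightarrow> x = 0"
proof -
  have "triple_vec 0 = 0\<^sub>v 3"
    by (auto simp: triple_vec_def)
  then show ?thesis
    using triple_vec_inject[of x 0] by simp
qed

lemma carrier_vec_3_triple_vec:
  assumes "v \<in> carrier_vec 3"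
  obtains x where "v = triple_vec x"
proof
  show "v = triple_vec (v $ 0, v $ 1, v $ 2)"
    using assms by (intro eq_vecI) (auto simp: triple_vec_def less_Suc_eq numeral_3_eq_3 numeral_2_eq_2)
qed

lemma gram_mat_mult_triple_vec:
  "gram_mat J t *\<^sub>v triple_vec x = triple_vec (\<Sum>j\<in>J. inner (t j) x *\<^sub>R t j)"
proof (rule eq_vecI)
  fix i assume "i < dim_vec (triple_vec (\<Sum>j\<in>J. inner (t j) x *\<^sub>R t j))"
  then have i: "i < 3"
    by (simp add: triple_vec_def)
  have "(gram_mat J t *\<^sub>v triple_vec x) $ i
      = (\<Sum>l<3. (\<Sum>j\<in>J. triple_vec (t j) $ i * triple_vec (t j) $ l) * triple_vec x $ l)"
    using i by (simp add: gram_mat_def scalar_prod_def atLeast0LessThan)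
  also have "\<dots> = (\<Sum>j\<in>J. triple_vec (t j) $ i * (\<Sum>l<3. triple_vec (t j) $ l * triple_vec x $ l))"
    by (simp add: sum_distrib_left sum_distrib_right mult_ac sum.swap[of _ "{..<3}"])
  also have "\<dots> = (\<Sum>j\<in>J. inner (t j) x * triple_vec (t j) $ i)"
  proof -
    have ip: "(\<Sum>l<3. triple_vec u $ l * triple_vec x $ l) = inner u x" for u
      using scalar_prod_triple_vec[of u x] by (simp add: scalar_prod_def atLeast0LessThan)
    show ?thesis
      unfolding ip by (simp add: mult.commute)
  qed
  finally show "(gram_mat J t *\<^sub>v triple_vec x) $ i = triple_vec (\<Sum>j\<in>J. inner (t j) x *\<^sub>R t j) $ i"
    using i by (simp add: index_triple_vec_sum)
qed (simp add: gram_mat_def triple_vec_def)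

lemma gram_form_eq_inner: "gram_form J t x = inner (\<Sum>j\<in>J. inner (t j) x *\<^sub>R t j) x"
  by (simp only: gram_form_def inner_sum_left inner_scaleR_left power2_eq_square)

lemma gram_form_scaleR: "gram_form J t (c *\<^sub>R x) = c\<^sup>2 * gram_form J t x"
  by (simp add: gram_form_def sum_distrib_left power_mult_distrib)

lemma gram_form_add_scaleR:
  "gram_form J t (a + s *\<^sub>R y)
    = gram_form J t a + 2 * s * inner (\<Sum>j\<in>J. inner (t j) a *\<^sub>R t j) y + s\<^sup>2 * gram_form J t y"
  by (simp add: gram_form_def inner_sum_left inner_add_right power2_eq_square
      sum.distrib sum_distrib_left algebra_simps)

lemma compact_sphere_heine_borel: "compact (sphere (a::'a::heine_borel) r)"
proof -
  have "closed (sphere a r)"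
    unfolding sphere_def by (intro closed_Collect_eq continuous_intros)
  moreover have "bounded (sphere a r)"
    by (rule bounded_subset[OF bounded_cball sphere_cball])
  ultimately show ?thesis
    by (simp add: compact_eq_bounded_closed)
qed

lemma gram_form_minimizer_exists:
  obtains a where "norm a = 1" "\<And>x. norm x = 1 \<Longrightarrow> gram_form J t a \<le> gram_form J t x"
proof -
  have "continuous_on (sphere 0 1) (gram_form J t)"
    unfolding gram_form_def
    by (intro continuous_intros bounded_linear.continuous_on[OF bounded_linear_inner_right continuous_on_id])
  moreover have "(1, 0, 0) \<in> sphere (0 :: real \<times> real \<times> real) 1"
    by (simp add: norm_Pair)
  ultimately obtain a where "a \<in> sphere 0 1" "\<forall>x \<in> sphere 0 1. gram_form J t a \<le> gram_form J t x"
    using continuous_attains_inf[OF compact_sphere_heine_borel] by (metis empty_iff)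
  then show ?thesis
    by (intro that) auto
qed

lemma nonneg_quadratic_imp_linear_coeff_zero:
  fixes D E :: real
  assumes "\<And>s. 0 \<le> 2 * s * D + s\<^sup>2 * E"
  shows "D = 0"
proof (rule ccontr)
  assume "D \<noteq> 0"
  have pos: "\<bar>E\<bar> + 1 > 0"
    using abs_ge_zero[of E] by linarith
  define s where "s = - D / (\<bar>E\<bar> + 1)"
  have "s \<noteq> 0"
    using \<open>D \<noteq> 0\<close> pos by (simp add: s_def)
  have D: "D = - s * (\<bar>E\<bar> + 1)"
    using pos by (simp add: s_def)
  have "2 * s * D = - 2 * (s\<^sup>2 * \<bar>E\<bar>) - 2 * s\<^sup>2"
    unfolding D by (simp add: power2_eq_square algebra_simps)
  moreover have "s\<^sup>2 * E \<le> s\<^sup>2 * \<bar>E\<bar>"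
    by (simp add: mult_left_mono)
  moreover have "0 \<le> s\<^sup>2 * \<bar>E\<bar>" "0 < s\<^sup>2"
    using \<open>s \<noteq> 0\<close> by simp_all
  ultimately show False
    using assms[of s] by linarith
qed

context
  fixes J :: "'j set" and t :: "'j \<Rightarrow> real \<times> real \<times> real" and a :: "real \<times> real \<times> real"
  assumes unit: "norm a = 1"
    and minimal: "\<And>x. norm x = 1 \<Longrightarrow> gram_form J t a \<le> gram_form J t x"
begin

lemma gram_form_minimizer_le: "gram_form J t a * (norm x)\<^sup>2 \<le> gram_form J t x"
proof (cases "x = 0")
  case False
  have "gram_form J t a \<le> gram_form J t (x /\<^sub>R norm x)"
    using False by (intro minimal) simp
  then have "(norm x)\<^sup>2 * gram_form J t a \<le> (norm x)\<^sup>2 * gram_form J t (x /\<^sub>R norm x)"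
    by (simp add: mult_left_mono)
  also have "\<dots> = gram_form J t x"
    using False by (simp add: gram_form_scaleR field_simps)
  finally show ?thesis
    by (simp add: mult.commute)
qed (simp add: gram_form_def)

lemma gram_form_minimizer_eigen:
  "(\<Sum>j\<in>J. inner (t j) a *\<^sub>R t j) = gram_form J t a *\<^sub>R a"
proof -
  let ?w = "\<Sum>j\<in>J. inner (t j) a *\<^sub>R t j" and ?l = "gram_form J t a"
  have orth: "inner (?w - ?l *\<^sub>R a) y = 0" for y
  proof -
    have "0 \<le> 2 * s * inner (?w - ?l *\<^sub>R a) y + s\<^sup>2 * (gram_form J t y - ?l * (norm y)\<^sup>2)" for s
    proof -
      have "?l * (norm (a + s *\<^sub>R y))\<^sup>2 \<le> gram_form J t (a + s *\<^sub>R y)"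
        by (rule gram_form_minimizer_le)
      moreover have "(norm (a + s *\<^sub>R y))\<^sup>2 = 1 + 2 * s * inner a y + s\<^sup>2 * (norm y)\<^sup>2"
        using unit unfolding power2_norm_eq_inner norm_eq_1
        by (simp add: inner_add_left inner_add_right inner_commute[of y a] power2_eq_square algebra_simps)
      ultimately show ?thesis
        by (simp add: gram_form_add_scaleR inner_diff_left algebra_simps)
    qed
    then show ?thesis
      by (rule nonneg_quadratic_imp_linear_coeff_zero)
  qed
  from orth[of "?w - ?l *\<^sub>R a"] show ?thesis
    by simp
qed


lemma eigenvalue_gram_mat_minimum: "eigenvalue (gram_mat J t) (gram_form J t a)"
proof -
  have "gram_mat J t *\<^sub>v triple_vec a = gram_form J t a \<cdot>\<^sub>v triple_vec a"
    by (simp add: gram_mat_mult_triple_vec gram_form_minimizer_eigen triple_vec_scaleR)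
  then show ?thesis
    unfolding eigenvalue_def eigenvector_def using unit
    by (intro exI[of _ "triple_vec a"]) (auto simp: triple_vec_zero_iff gram_mat_def)
qed
end

lemma finite_eigenvalues:
  fixes A :: "'a::field mat"
  assumes "A \<in> carrier_mat n n"
  shows "finite {w. eigenvalue A w}"
proof -
  have "char_poly A \<noteq> 0"
    using degree_monic_char_poly[OF assms] by auto
  then show ?thesis
    unfolding eigenvalue_root_char_poly[OF assms] by (rule poly_roots_finite)
qed

lemma finite_eigenvalues_gram_mat: "finite {w. eigenvalue (gram_mat J t) w}"
  by (rule finite_eigenvalues[OF gram_mat_carrier])

lemma min_eigenvalue_gram_mat_le: "min_eigenvalue (gram_mat J t) * (norm x)\<^sup>2 \<le> gram_form J t x"
proof -
  obtain a where a: "norm a = 1" "\<And>x. norm x = 1 \<Longrightarrow> gram_form J t a \<le> gram_form J t x"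
    using gram_form_minimizer_exists[of J t] by blast
  have "min_eigenvalue (gram_mat J t) \<le> gram_form J t a"
    unfolding min_eigenvalue_def
    by (rule Min_le[OF finite_eigenvalues_gram_mat]) (simp add: eigenvalue_gram_mat_minimum[OF a])
  then have "min_eigenvalue (gram_mat J t) * (norm x)\<^sup>2 \<le> gram_form J t a * (norm x)\<^sup>2"
    by (rule mult_right_mono) simp
  also have "\<dots> \<le> gram_form J t x"
    by (rule gram_form_minimizer_le[OF a])
  finally show ?thesis .
qed

lemma min_eigenvalue_gram_mat_attained:
  "\<exists>e. norm e = 1 \<and> gram_form J t e = min_eigenvalue (gram_mat J t)"
proof -
  let ?W = "gram_mat J t" and ?w = "min_eigenvalue (gram_mat J t)"
  obtain a where a: "norm a = 1" "\<And>x. norm x = 1 \<Longrightarrow> gram_form J t a \<le> gram_form J t x"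
    using gram_form_minimizer_exists[of J t] by blast
  have "eigenvalue ?W ?w"
    using Min_in[OF finite_eigenvalues_gram_mat] eigenvalue_gram_mat_minimum[OF a]
    unfolding min_eigenvalue_def by blast
  then obtain v where v: "v \<in> carrier_vec 3" "v \<noteq> 0\<^sub>v 3" "?W *\<^sub>v v = ?w \<cdot>\<^sub>v v"
    by (auto simp: eigenvalue_def eigenvector_def gram_mat_def)
  then obtain x where x: "v = triple_vec x"
    using carrier_vec_3_triple_vec by blast
  have "x \<noteq> 0"
    using v(2) x triple_vec_zero_iff by blast
  have "(\<Sum>j\<in>J. inner (t j) x *\<^sub>R t j) = ?w *\<^sub>R x"
    using v(3) unfolding x gram_mat_mult_triple_vec triple_vec_scaleR[symmetric] triple_vec_inject .
  then have "gram_form J t x = ?w * (norm x)\<^sup>2"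
    by (simp add: gram_form_eq_inner power2_norm_eq_inner)
  then have "gram_form J t (x /\<^sub>R norm x) = ?w"
    using \<open>x \<noteq> 0\<close> by (simp add: gram_form_scaleR field_simps)
  then show ?thesis
    using \<open>x \<noteq> 0\<close> by (intro exI[of _ "x /\<^sub>R norm x"]) simp
qed

section \<open>Convex combinations of unit vectors\<close>

lemma convex_sum_squares_split:
  fixes \<mu> :: "nat \<Rightarrow> real" and P :: "'j \<Rightarrow> real"
  assumes \<mu>: "(\<Sum>k<m. \<mu> k) = 1" and r: "(\<Sum>k<m. \<mu> k *\<^sub>R n k) = r"
  shows "(\<Sum>k<m. \<mu> k * (\<Sum>j\<in>J. ((P j + inner (t j) (n k)) / 2)\<^sup>2))
    = (\<Sum>j\<in>J. ((P j + inner (t j) r) / 2)\<^sup>2) + (\<Sum>k<m. \<mu> k * gram_form J t (n k - r)) / 4"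
proof -
  define A where "A j = (P j + inner (t j) r) / 2" for j
  define d where "d k j = inner (t j) (n k - r)" for k j
  have centred: "(\<Sum>k<m. \<mu> k * d k j) = 0" for j
  proof -
    have "(\<Sum>k<m. \<mu> k * d k j) = inner (t j) (\<Sum>k<m. \<mu> k *\<^sub>R (n k - r))"
      by (simp add: d_def inner_sum_right)
    also have "(\<Sum>k<m. \<mu> k *\<^sub>R (n k - r)) = 0"
      using \<mu> r by (simp add: scaleR_diff_right sum_subtractf flip: scaleR_sum_left)
    finally show ?thesis
      by simp
  qed
  have split: "(P j + inner (t j) (n k)) / 2 = A j + d k j / 2" for j k
    by (simp add: A_def d_def inner_diff_right field_simps)
  have "(\<Sum>k<m. \<mu> k * (\<Sum>j\<in>J. ((P j + inner (t j) (n k)) / 2)\<^sup>2))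
      = (\<Sum>k<m. \<Sum>j\<in>J. \<mu> k * (A j)\<^sup>2 + A j * (\<mu> k * d k j) + 1 / 4 * (\<mu> k * (d k j)\<^sup>2))"
    unfolding split by (simp add: sum_distrib_left power2_eq_square algebra_simps)
  also have "\<dots> = (\<Sum>j\<in>J. \<Sum>k<m. \<mu> k * (A j)\<^sup>2 + A j * (\<mu> k * d k j) + 1 / 4 * (\<mu> k * (d k j)\<^sup>2))"
    by (rule sum.swap)
  also have "\<dots> = (\<Sum>j\<in>J. (A j)\<^sup>2 * (\<Sum>k<m. \<mu> k) + A j * (\<Sum>k<m. \<mu> k * d k j)
      + 1 / 4 * (\<Sum>k<m. \<mu> k * (d k j)\<^sup>2))"
    by (simp add: sum.distrib sum_distrib_left sum_distrib_right mult_ac)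
  also have "\<dots> = (\<Sum>j\<in>J. (A j)\<^sup>2) + 1 / 4 * (\<Sum>j\<in>J. \<Sum>k<m. \<mu> k * (d k j)\<^sup>2)"
    by (simp add: \<mu> centred sum.distrib sum_distrib_left)
  also have "(\<Sum>j\<in>J. \<Sum>k<m. \<mu> k * (d k j)\<^sup>2) = (\<Sum>k<m. \<mu> k * gram_form J t (n k - r))"
    unfolding gram_form_def d_def by (subst sum.swap) (simp add: sum_distrib_left)
  finally show ?thesis
    by (simp add: A_def)
qed

lemma convex_sum_dist_sphere:
  fixes \<mu> :: "nat \<Rightarrow> real" and n :: "nat \<Rightarrow> 'a::real_inner"
  assumes \<mu>: "(\<Sum>k<m. \<mu> k) = 1" and r: "(\<Sum>k<m. \<mu> k *\<^sub>R n k) = r"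
    and unit: "\<And>k. k < m \<Longrightarrow> norm (n k) = 1"
  shows "(\<Sum>k<m. \<mu> k * (norm (n k - r))\<^sup>2) = 1 - (norm r)\<^sup>2"
proof -
  have "(\<Sum>k<m. \<mu> k * (norm (n k - r))\<^sup>2)
      = (\<Sum>k<m. \<mu> k * (norm (n k))\<^sup>2) - 2 * inner (\<Sum>k<m. \<mu> k *\<^sub>R n k) r + (\<Sum>k<m. \<mu> k) * (norm r)\<^sup>2"
    by (simp add: power2_norm_eq_inner inner_diff_left inner_diff_right inner_sum_left inner_sum_right
        inner_commute algebra_simps sum_subtractf sum.distrib sum_distrib_left sum_distrib_right)
  also have "(\<Sum>k<m. \<mu> k * (norm (n k))\<^sup>2) = 1"
    using \<mu> unit by simp
  finally show ?thesis
    using \<mu> r by (simp add: power2_norm_eq_inner)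
qed

lemma line_meets_unit_sphere:
  fixes r e :: "'a::real_inner"
  assumes "norm r < 1" "norm e = 1"
  obtains s1 s2 where "s1 > 0" "s2 < 0" "norm (r + s1 *\<^sub>R e) = 1" "norm (r + s2 *\<^sub>R e) = 1"
proof -
  \<comment> \<open>norm (r + s e) = 1 is the quadratic equation (s + b)^2 = D\<close>
  define b where "b = inner r e"
  define D where "D = b\<^sup>2 + 1 - inner r r"
  have "inner r r < 1"
    using assms(1) by (simp add: abs_square_less_1 flip: power2_norm_eq_inner)
  then have "0 \<le> D"
    using zero_le_power2[of b] unfolding D_def by linarith
  have "\<bar>b\<bar> < sqrt D"
    using \<open>inner r r < 1\<close> by (simp add: D_def real_less_rsqrt)
  have root: "norm (r + s *\<^sub>R e) = 1" if "(s + b)\<^sup>2 = D" for s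
  proof -
    have "inner (r + s *\<^sub>R e) (r + s *\<^sub>R e) = inner r r + 2 * s * b + s\<^sup>2"
      using assms(2) by (simp add: b_def norm_eq_1 inner_add_left inner_add_right inner_commute[of e r]
          power2_eq_square algebra_simps)
    also have "\<dots> = 1"
      using that unfolding D_def power2_sum by linarith
    finally show ?thesis
      by (simp add: norm_eq_1)
  qed
  show ?thesis
  proof (rule that)
    show "norm (r + (- b + sqrt D) *\<^sub>R e) = 1" "norm (r + (- b - sqrt D) *\<^sub>R e) = 1"
      using \<open>0 \<le> D\<close> by (simp_all add: root)
  qed (use \<open>\<bar>b\<bar> < sqrt D\<close> in auto)
qed

lemma two_point_decomposition:
  fixes r e :: "'a::real_inner"
  assumes "norm r \<le> 1" "norm e = 1"
  obtains \<mu> s :: "nat \<Rightarrow> real"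
  where "\<And>k. k < 2 \<Longrightarrow> \<mu> k > 0" "\<And>k. k < 2 \<Longrightarrow> norm (r + s k *\<^sub>R e) = 1"
    "(\<Sum>k<2. \<mu> k) = 1" "(\<Sum>k<2. \<mu> k *\<^sub>R (r + s k *\<^sub>R e)) = r"
proof (cases "norm r = 1")
  case True
  show ?thesis
    by (rule that[of "\<lambda>_. 1 / 2" "\<lambda>_. 0"]) (simp_all add: True sum_lessThan_2 flip: scaleR_add_left)
next
  case False
  with assms(1) have "norm r < 1"
    by simp
  then obtain s1 s2 where s: "s1 > 0" "s2 < 0" "norm (r + s1 *\<^sub>R e) = 1" "norm (r + s2 *\<^sub>R e) = 1"
    using line_meets_unit_sphere[OF _ assms(2)] by blast
  define s where "s k = (if k = 0 then s1 else s2)" for k :: nat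
  \<comment> \<open>the weights that make the two points average to r\<close>
  define \<mu> where "\<mu> k = (if k = 0 then - s2 / (s1 - s2) else s1 / (s1 - s2))" for k :: nat
  have "s1 - s2 \<noteq> 0"
    using s by simp
  with s have \<mu>: "\<mu> 0 > 0" "\<mu> 1 > 0" "\<mu> 0 + \<mu> 1 = 1" "\<mu> 0 * s1 + \<mu> 1 * s2 = 0"
    by (simp_all add: \<mu>_def divide_simps)
  have "(\<Sum>k<2. \<mu> k *\<^sub>R (r + s k *\<^sub>R e)) = (\<mu> 0 + \<mu> 1) *\<^sub>R r + (\<mu> 0 * s1 + \<mu> 1 * s2) *\<^sub>R e"
    by (simp add: sum_lessThan_2 s_def scaleR_add_right scaleR_add_left)
  then show ?thesis
    using \<mu> s by (intro that[of \<mu> s]) (auto simp: sum_lessThan_2 less_2_cases_iff s_def)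
qed

section \<open>Operators on the span of an orthonormal pair\<close>

locale orthonormal_pair =
  fixes N :: nat and v0 v1 :: "complex vec"
  assumes v0: "v0 \<in> carrier_vec (2 ^ N)" and v1: "v1 \<in> carrier_vec (2 ^ N)"
    and orthonormal: "v0 \<bullet>c v0 = 1" "v1 \<bullet>c v1 = 1" "v0 \<bullet>c v1 = 0"
begin

(* Vectors and operators on the span of v0, v1 are encoded by their coordinates in this basis:
   frame_vec y and frame_op c only depend on the values y p and c p q with p, q < 2. *)
definition frame :: "nat \<Rightarrow> complex vec" where
  "frame p = (if p = 0 then v0 else v1)"

definition frame_vec :: "(nat \<Rightarrow> complex) \<Rightarrow> complex vec" where
  "frame_vec y = y 0 \<cdot>\<^sub>v v0 + y 1 \<cdot>\<^sub>v v1"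

definition frame_coord :: "complex vec \<Rightarrow> nat \<Rightarrow> complex" where
  "frame_coord x p = (\<Sum>i<2 ^ N. cnj (frame p $ i) * x $ i)"

definition frame_op :: "(nat \<Rightarrow> nat \<Rightarrow> complex) \<Rightarrow> complex mat" where
  "frame_op c = mat (2 ^ N) (2 ^ N) (\<lambda>(i, l). \<Sum>p<2. \<Sum>q<2. c p q * frame p $ i * cnj (frame q $ l))"

definition frame_coeff :: "complex mat \<Rightarrow> nat \<Rightarrow> nat \<Rightarrow> complex" where
  "frame_coeff A p q = (\<Sum>i<2 ^ N. \<Sum>l<2 ^ N. cnj (frame p $ i) * A $$ (i, l) * frame q $ l)"

lemma frame_carrier [simp]: "frame p \<in> carrier_vec (2 ^ N)"
  using v0 v1 by (simp add: frame_def)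

lemma frame_vec_carrier [simp]: "frame_vec y \<in> carrier_vec (2 ^ N)"
  using v0 v1 by (simp add: frame_vec_def)

lemma frame_op_carrier [simp]: "frame_op c \<in> carrier_mat (2 ^ N) (2 ^ N)"
  by (simp add: frame_op_def)

lemma dim_frame_vec [simp]: "dim_vec (frame_vec y) = 2 ^ N"
  by (rule carrier_vecD[OF frame_vec_carrier])

lemma dim_frame_op [simp]: "dim_row (frame_op c) = 2 ^ N" "dim_col (frame_op c) = 2 ^ N"
  by (simp_all add: frame_op_def)

lemma index_frame_vec: "i < 2 ^ N \<Longrightarrow> frame_vec y $ i = (\<Sum>p<2. y p * frame p $ i)"
  using v0 v1 by (simp add: frame_vec_def frame_def sum_lessThan_2)

lemma index_frame_op:
  "i < 2 ^ N \<Longrightarrow> l < 2 ^ N \<Longrightarrow> frame_op c $$ (i, l) = (\<Sum>p<2. \<Sum>q<2. c p q * frame p $ i * cnj (frame q $ l))"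
  by (simp add: frame_op_def)

lemma frame_orthonormal:
  assumes "p < 2" "q < 2"
  shows "(\<Sum>i<2 ^ N. cnj (frame p $ i) * frame q $ i) = (if p = q then 1 else 0)"
proof -
  have "v1 \<bullet>c v0 = cnj (v0 \<bullet>c v1)"
    using v0 v1 by (simp add: cscalar_prod_eq_sum mult.commute)
  then have "frame q \<bullet>c frame p = (if p = q then 1 else 0)"
    using assms orthonormal by (auto simp: frame_def less_2_cases_iff)
  then show ?thesis
    by (simp add: cscalar_prod_eq_sum[of _ "2 ^ N"] mult.commute)
qed

lemma frame_coord_frame_vec:
  assumes "q < 2"
  shows "frame_coord (frame_vec y) q = y q"
proof -
  have "frame_coord (frame_vec y) q = (\<Sum>i<2 ^ N. \<Sum>p<2. y p * (cnj (frame q $ i) * frame p $ i))"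
    by (simp add: frame_coord_def index_frame_vec sum_distrib_left mult_ac)
  also have "\<dots> = (\<Sum>p<2. y p * (\<Sum>i<2 ^ N. cnj (frame q $ i) * frame p $ i))"
    by (subst sum.swap) (simp add: sum_distrib_left)
  also have "\<dots> = y q"
    using assms by (auto simp: frame_orthonormal sum_lessThan_2 less_2_cases_iff)
  finally show ?thesis .
qed

lemma frame_coeff_frame_op:
  assumes "p < 2" "q < 2"
  shows "frame_coeff (frame_op c) p q = c p q"
proof -
  have "frame_coeff (frame_op c) p q = (\<Sum>i<2 ^ N. \<Sum>l<2 ^ N.
      cnj (frame p $ i) * (\<Sum>p'<2. \<Sum>q'<2. c p' q' * frame p' $ i * cnj (frame q' $ l)) * frame q $ l)"
    by (simp add: frame_coeff_def index_frame_op)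
  also have "\<dots> = (\<Sum>p'<2. \<Sum>q'<2. c p' q' * ((\<Sum>i<2 ^ N. cnj (frame p $ i) * frame p' $ i)
      * (\<Sum>l<2 ^ N. cnj (frame q' $ l) * frame q $ l)))"
    by (rule sum_sandwich)
  also have "\<dots> = c p q"
    using assms by (auto simp: frame_orthonormal sum_lessThan_2 less_2_cases_iff)
  finally show ?thesis .
qed

lemma frame_op_cong: "(\<And>p q. p < 2 \<Longrightarrow> q < 2 \<Longrightarrow> c p q = d p q) \<Longrightarrow> frame_op c = frame_op d"
  unfolding frame_op_def by (intro cong_mat refl) (auto intro!: sum.cong)

lemma frame_op_eqD: "frame_op c = frame_op d \<Longrightarrow> p < 2 \<Longrightarrow> q < 2 \<Longrightarrow> c p q = d p q"
  by (metis frame_coeff_frame_op)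

lemma mtrace_frame_op_mult:
  assumes "B \<in> carrier_mat (2 ^ N) (2 ^ N)"
  shows "mtrace (frame_op c * B) = (\<Sum>p<2. \<Sum>q<2. c p q * frame_coeff B q p)"
proof -
  have "mtrace (frame_op c * B) = (\<Sum>i<2 ^ N. \<Sum>l<2 ^ N. frame_op c $$ (i, l) * B $$ (l, i))"
    using assms by (intro mtrace_mult) auto
  also have "\<dots> = (\<Sum>l<2 ^ N. \<Sum>i<2 ^ N. frame_op c $$ (i, l) * B $$ (l, i))"
    by (rule sum.swap)
  also have "\<dots> = (\<Sum>l<2 ^ N. \<Sum>i<2 ^ N. \<Sum>p<2. \<Sum>q<2.
      c p q * (cnj (frame q $ l) * B $$ (l, i) * frame p $ i))"
    by (simp add: index_frame_op sum_distrib_left sum_distrib_right mult_ac)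
  also have "\<dots> = (\<Sum>p<2. \<Sum>q<2. \<Sum>l<2 ^ N. \<Sum>i<2 ^ N.
      c p q * (cnj (frame q $ l) * B $$ (l, i) * frame p $ i))"
    by (rule sum_swap_pairs)
  also have "\<dots> = (\<Sum>p<2. \<Sum>q<2. c p q * frame_coeff B q p)"
    by (simp add: frame_coeff_def sum_distrib_left)
  finally show ?thesis .
qed

lemma mtrace_frame_op: "mtrace (frame_op c) = c 0 0 + c 1 1"
proof -
  have "mtrace (frame_op c) = (\<Sum>i<2 ^ N. \<Sum>p<2. \<Sum>q<2. c p q * (cnj (frame q $ i) * frame p $ i))"
    by (simp add: mtrace_def index_frame_op mult_ac)
  also have "\<dots> = (\<Sum>p<2. \<Sum>q<2. \<Sum>i<2 ^ N. c p q * (cnj (frame q $ i) * frame p $ i))"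
    by (rule sum_swap_two[symmetric])
  also have "\<dots> = c 0 0 + c 1 1"
    by (simp add: frame_orthonormal sum_lessThan_2 flip: sum_distrib_left)
  finally show ?thesis .
qed

lemma frame_op_mult_vec:
  assumes x: "x \<in> carrier_vec (2 ^ N)"
  shows "frame_op c *\<^sub>v x = frame_vec (\<lambda>p. \<Sum>q<2. c p q * frame_coord x q)"
proof (rule eq_vecI)
  fix i assume "i < dim_vec (frame_vec (\<lambda>p. \<Sum>q<2. c p q * frame_coord x q))"
  then have i: "i < 2 ^ N"
    by simp
  have "(frame_op c *\<^sub>v x) $ i = (\<Sum>l<2 ^ N. frame_op c $$ (i, l) * x $ l)"
    using i x by (simp add: scalar_prod_def atLeast0LessThan)
  also have "\<dots> = (\<Sum>l<2 ^ N. \<Sum>p<2. \<Sum>q<2. c p q * frame p $ i * (cnj (frame q $ l) * x $ l))"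
    using i by (simp add: index_frame_op sum_distrib_left sum_distrib_right mult_ac)
  also have "\<dots> = (\<Sum>p<2. \<Sum>q<2. \<Sum>l<2 ^ N. c p q * frame p $ i * (cnj (frame q $ l) * x $ l))"
    by (rule sum_swap_two[symmetric])
  also have "\<dots> = frame_vec (\<lambda>p. \<Sum>q<2. c p q * frame_coord x q) $ i"
    using i by (simp add: index_frame_vec frame_coord_def sum_distrib_left sum_distrib_right mult_ac)
  finally show "(frame_op c *\<^sub>v x) $ i = frame_vec (\<lambda>p. \<Sum>q<2. c p q * frame_coord x q) $ i" .
qed (use x in simp)

lemma cscalar_prod_frame_vec:
  assumes "x \<in> carrier_vec (2 ^ N)"
  shows "frame_vec y \<bullet>c x = (\<Sum>p<2. y p * cnj (frame_coord x p))"
proof -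
  have "frame_vec y \<bullet>c x = (\<Sum>i<2 ^ N. \<Sum>p<2. y p * (frame p $ i * cnj (x $ i)))"
    by (simp add: cscalar_prod_eq_sum[OF assms] index_frame_vec sum_distrib_left sum_distrib_right mult_ac)
  also have "\<dots> = (\<Sum>p<2. \<Sum>i<2 ^ N. y p * (frame p $ i * cnj (x $ i)))"
    by (rule sum.swap)
  also have "\<dots> = (\<Sum>p<2. y p * cnj (frame_coord x p))"
    by (simp add: frame_coord_def sum_distrib_left cnj_sum)
  finally show ?thesis .
qed

lemma ketbra_frame_vec: "ketbra (frame_vec y) (frame_vec z) = frame_op (\<lambda>p q. y p * cnj (z q))"
  by (rule eq_matI)
    (simp_all add: ketbra_def index_frame_vec index_frame_op sum_product cnj_sum mult_ac)

lemma mixture_frame_op: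
  assumes "\<And>k. k < m \<Longrightarrow> \<Psi> k = frame_vec (y k)"
  shows "mat (2 ^ N) (2 ^ N) (\<lambda>(i, j). \<Sum>k<m. complex_of_real (\<mu> k) * \<Psi> k $ i * cnj (\<Psi> k $ j))
    = frame_op (\<lambda>p q. \<Sum>k<m. complex_of_real (\<mu> k) * (y k p * cnj (y k q)))"
proof (rule eq_matI)
  fix i j assume "i < dim_row (frame_op (\<lambda>p q. \<Sum>k<m. complex_of_real (\<mu> k) * (y k p * cnj (y k q))))"
    "j < dim_col (frame_op (\<lambda>p q. \<Sum>k<m. complex_of_real (\<mu> k) * (y k p * cnj (y k q))))"
  then have ij: "i < 2 ^ N" "j < 2 ^ N"
    by simp_all
  have "(\<Sum>k<m. complex_of_real (\<mu> k) * \<Psi> k $ i * cnj (\<Psi> k $ j))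
      = (\<Sum>k<m. \<Sum>p<2. \<Sum>q<2. complex_of_real (\<mu> k) * (y k p * cnj (y k q)) * (frame p $ i * cnj (frame q $ j)))"
    using ij assms by (intro sum.cong refl) (simp add: index_frame_vec sum_product sum_distrib_left cnj_sum mult_ac)
  also have "\<dots> = (\<Sum>p<2. \<Sum>q<2. \<Sum>k<m. complex_of_real (\<mu> k) * (y k p * cnj (y k q)) * (frame p $ i * cnj (frame q $ j)))"
    by (rule sum_swap_two[symmetric])
  finally show "mat (2 ^ N) (2 ^ N) (\<lambda>(i, j). \<Sum>k<m. complex_of_real (\<mu> k) * \<Psi> k $ i * cnj (\<Psi> k $ j)) $$ (i, j)
      = frame_op (\<lambda>p q. \<Sum>k<m. complex_of_real (\<mu> k) * (y k p * cnj (y k q))) $$ (i, j)"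
    using ij by (simp add: index_frame_op sum_distrib_right mult.assoc)
qed simp_all

lemma frame_vec_frame_coord: "x = a \<cdot>\<^sub>v v0 + b \<cdot>\<^sub>v v1 \<Longrightarrow> x = frame_vec (frame_coord x)"
proof -
  assume x: "x = a \<cdot>\<^sub>v v0 + b \<cdot>\<^sub>v v1"
  then have "x = frame_vec (\<lambda>p. if p = 0 then a else b)"
    by (simp add: frame_vec_def)
  then show ?thesis
    by (metis (no_types, lifting) frame_coord_frame_vec frame_vec_def less_2_cases_iff one_less_numeral_iff
        semiring_norm(76) zero_less_numeral)
qed

lemma frame_op_quadratic_form:
  "(frame_op c *\<^sub>v frame_vec y) \<bullet>c frame_vec y = (\<Sum>p<2. \<Sum>q<2. c p q * (y q * cnj (y p)))"
  by (simp add: frame_op_mult_vec cscalar_prod_frame_vec frame_coord_frame_vec sum_distrib_left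
      sum_distrib_right mult_ac)

lemma frame_vec_unit:
  "frame_vec y \<bullet>c frame_vec y = 1 \<longleftrightarrow> y 0 * cnj (y 0) + y 1 * cnj (y 1) = 1"
  by (simp add: cscalar_prod_frame_vec frame_coord_frame_vec sum_lessThan_2)

lemma ketbra_frame_vec_bloch:
  assumes "y 0 * cnj (y 0) + y 1 * cnj (y 1) = 1"
  shows "ketbra (frame_vec y) (frame_vec y) = frame_op (bloch (bloch_vector (\<lambda>p q. y p * cnj (y q))))"
  unfolding ketbra_frame_vec using assms
  by (intro frame_op_cong bloch_bloch_vector[symmetric]) (auto simp: mult.commute)

lemma tau_op_eq_frame_op:
  assumes "i \<in> {1, 2, 3}"
  shows "tau_op v0 v1 i = frame_op (\<lambda>p q. pauli i $$ (p, q))"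
proof (rule eq_matI)
  fix a b assume "a < dim_row (frame_op (\<lambda>p q. pauli i $$ (p, q)))" "b < dim_col (frame_op (\<lambda>p q. pauli i $$ (p, q)))"
  then have "a < 2 ^ N" "b < 2 ^ N"
    by simp_all
  with assms v0 v1 show "tau_op v0 v1 i $$ (a, b) = frame_op (\<lambda>p q. pauli i $$ (p, q)) $$ (a, b)"
    by (auto simp: tau_op_def ketbra_def index_frame_op sum_lessThan_2 frame_def pauli_def
        mat_of_rows_list_def algebra_simps)
qed (use assms v0 v1 in \<open>auto simp: tau_op_def ketbra_def\<close>)

lemma frame_coeff_hermitian:
  assumes "\<And>i l. i < 2 ^ N \<Longrightarrow> l < 2 ^ N \<Longrightarrow> cnj (A $$ (i, l)) = A $$ (l, i)"
  shows "cnj (frame_coeff A p q) = frame_coeff A q p"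
proof -
  have "cnj (frame_coeff A p q) = (\<Sum>i<2 ^ N. \<Sum>l<2 ^ N. frame p $ i * A $$ (l, i) * cnj (frame q $ l))"
    by (simp add: frame_coeff_def cnj_sum assms)
  also have "\<dots> = (\<Sum>l<2 ^ N. \<Sum>i<2 ^ N. frame p $ i * A $$ (l, i) * cnj (frame q $ l))"
    by (rule sum.swap)
  also have "\<dots> = frame_coeff A q p"
    by (simp add: frame_coeff_def mult_ac)
  finally show ?thesis .
qed

(* P_j and t_j in the notation of the proof idea. *)
definition identity_corr :: "(nat \<Rightarrow> nat) \<Rightarrow> real" where
  "identity_corr j = Re (frame_coeff (pauli_string N j) 0 0 + frame_coeff (pauli_string N j) 1 1)"

definition tau_corr :: "(nat \<Rightarrow> nat) \<Rightarrow> real \<times> real \<times> real" where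
  "tau_corr j = (Re (corr_T N (tau_op v0 v1 1) j), Re (corr_T N (tau_op v0 v1 2) j),
     Re (corr_T N (tau_op v0 v1 3) j))"

lemma corr_T_frame_op: "corr_T N (frame_op c) j = (\<Sum>p<2. \<Sum>q<2. c p q * frame_coeff (pauli_string N j) q p)"
  unfolding corr_T_def by (rule mtrace_frame_op_mult) simp

lemma Im_corr_T_tau_op:
  assumes "i \<in> {1, 2, 3}"
  shows "Im (corr_T N (tau_op v0 v1 i) j) = 0"
proof -
  let ?F = "frame_coeff (pauli_string N j)"
  have F: "cnj (?F p q) = ?F q p" for p q
    by (rule frame_coeff_hermitian) (simp add: pauli_string_hermitian)
  have "Im (?F 0 0) = 0" "Im (?F 1 1) = 0" "?F 0 1 = cnj (?F 1 0)"
    using F[of 0 0] F[of 1 1] F[of 1 0] by (auto simp: complex_eq_iff)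
  with assms show ?thesis
    by (auto simp: tau_op_eq_frame_op corr_T_frame_op sum_lessThan_2 pauli_def mat_of_rows_list_def
        complex_eq_iff)
qed

lemma Re_corr_T_frame_op_bloch:
  "Re (corr_T N (frame_op (bloch x)) j) = (identity_corr j + inner (tau_corr j) x) / 2"
  by (cases x) (simp add: corr_T_frame_op tau_op_eq_frame_op sum_lessThan_2 bloch_def pauli_def
      mat_of_rows_list_def identity_corr_def tau_corr_def field_simps)

lemma length_corr_frame_op_bloch:
  "length_corr N (frame_op (bloch x)) = (\<Sum>j\<in>pauli_indices N. ((identity_corr j + inner (tau_corr j) x) / 2)\<^sup>2)"
  unfolding length_corr_def Re_corr_T_frame_op_bloch ..

lemma W_mat_eq_gram_mat: "W_mat N v0 v1 = gram_mat (pauli_indices N) tau_corr"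
proof (rule eq_matI)
  fix i l assume "i < dim_row (gram_mat (pauli_indices N) tau_corr)" "l < dim_col (gram_mat (pauli_indices N) tau_corr)"
  then have il: "i < 3" "l < 3"
    by (simp_all add: gram_mat_def)
  then have tau: "Suc i \<in> {1, 2, 3}" "Suc l \<in> {1, 2, 3}"
    by auto
  have tau_corr: "triple_vec (tau_corr j) $ k = Re (corr_T N (tau_op v0 v1 (Suc k)) j)" if "k < 3" for j k
    using that by (auto simp: triple_vec_def tau_corr_def less_Suc_eq numeral_3_eq_3 numeral_2_eq_2)
  have "W_mat N v0 v1 $$ (i, l) = Re (\<Sum>j\<in>pauli_indices N.
      corr_T N (tau_op v0 v1 (Suc i)) j * corr_T N (tau_op v0 v1 (Suc l)) j)"
    using il tau by (simp add: W_mat_def mtrace_S_op_kron tau_op_eq_frame_op del: insert_iff)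
  also have "\<dots> = gram_mat (pauli_indices N) tau_corr $$ (i, l)"
    using il by (simp add: gram_mat_def tau_corr Re_sum Im_corr_T_tau_op[OF tau(1)] Im_corr_T_tau_op[OF tau(2)])
  finally show "W_mat N v0 v1 $$ (i, l) = gram_mat (pauli_indices N) tau_corr $$ (i, l)" .
qed (simp_all add: W_mat_def gram_mat_def)

end

section \<open>A density matrix supported on the span\<close>

locale supported_state = orthonormal_pair +
  fixes \<rho> :: "complex mat"
  assumes density: "density_matrix N \<rho>"
    and range_in_span: "\<And>x. x \<in> carrier_vec (2 ^ N) \<Longrightarrow> \<exists>a b. \<rho> *\<^sub>v x = a \<cdot>\<^sub>v v0 + b \<cdot>\<^sub>v v1"
begin

lemma rho_carrier: "\<rho> \<in> carrier_mat (2 ^ N) (2 ^ N)"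
  using density unfolding density_matrix_def by blast

lemma rho_hermitian:
  assumes "i < 2 ^ N" "l < 2 ^ N"
  shows "cnj (\<rho> $$ (i, l)) = \<rho> $$ (l, i)"
proof -
  have "\<forall>i < 2 ^ N. \<forall>j < 2 ^ N. \<rho> $$ (j, i) = cnj (\<rho> $$ (i, j))"
    using density unfolding density_matrix_def by blast
  then show ?thesis
    using assms by (metis (no_types))
qed

lemma rho_psd: "x \<in> carrier_vec (2 ^ N) \<Longrightarrow> 0 \<le> Re ((\<rho> *\<^sub>v x) \<bullet>c x)"
  using density unfolding density_matrix_def by blast

lemma rho_trace: "mtrace \<rho> = 1"
  using density unfolding density_matrix_def by blast

lemma rho_column_in_span:
  assumes "i < 2 ^ N" "l < 2 ^ N"
  shows "\<rho> $$ (i, l) = (\<Sum>p<2. (\<Sum>k<2 ^ N. cnj (frame p $ k) * \<rho> $$ (k, l)) * frame p $ i)"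
proof -
  let ?x = "\<rho> *\<^sub>v unit_vec (2 ^ N) l"
  obtain a b where "?x = a \<cdot>\<^sub>v v0 + b \<cdot>\<^sub>v v1"
    using range_in_span[OF unit_vec_carrier] by blast
  then have "?x $ i = (\<Sum>p<2. frame_coord ?x p * frame p $ i)"
    using assms(1) by (metis frame_vec_frame_coord index_frame_vec)
  moreover have entry: "?x $ k = \<rho> $$ (k, l)" if "k < 2 ^ N" for k
    using rho_carrier that assms(2) by simp
  ultimately show ?thesis
    using assms(1) by (simp add: frame_coord_def)
qed

lemma rho_eq_frame_op: "\<rho> = frame_op (frame_coeff \<rho>)"
proof -
  define \<kappa> where "\<kappa> p l = (\<Sum>k<2 ^ N. cnj (frame p $ k) * \<rho> $$ (k, l))" for p l
  have column: "\<rho> $$ (i, l) = (\<Sum>p<2. \<kappa> p l * frame p $ i)" if "i < 2 ^ N" "l < 2 ^ N" for i l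
    unfolding \<kappa>_def by (rule rho_column_in_span[OF that])
  have cnj_\<kappa>: "cnj (\<kappa> q k) = (\<Sum>k'<2 ^ N. \<rho> $$ (k, k') * frame q $ k')" if "k < 2 ^ N" for q k
    unfolding \<kappa>_def using that by (simp add: cnj_sum rho_hermitian mult.commute)
  \<comment> \<open>by hermiticity the rows of \<rho> lie in the span as well\<close>
  have row: "\<kappa> p l = (\<Sum>q<2. frame_coeff \<rho> p q * cnj (frame q $ l))" if "l < 2 ^ N" for p l
  proof -
    have "\<kappa> p l = (\<Sum>k<2 ^ N. cnj (frame p $ k) * cnj (\<rho> $$ (l, k)))"
      unfolding \<kappa>_def using that by (intro sum.cong refl) (simp add: rho_hermitian)
    also have "\<dots> = (\<Sum>k<2 ^ N. \<Sum>q<2. cnj (frame q $ l) * (cnj (frame p $ k) * cnj (\<kappa> q k)))"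
      using that by (intro sum.cong refl) (simp add: column cnj_sum sum_distrib_left mult_ac)
    also have "\<dots> = (\<Sum>q<2. cnj (frame q $ l) * (\<Sum>k<2 ^ N. cnj (frame p $ k) * cnj (\<kappa> q k)))"
      by (subst sum.swap) (simp only: sum_distrib_left)
    also have "\<dots> = (\<Sum>q<2. frame_coeff \<rho> p q * cnj (frame q $ l))"
      unfolding frame_coeff_def
      by (intro sum.cong refl) (simp add: cnj_\<kappa> sum_distrib_left mult_ac)
    finally show ?thesis .
  qed
  show ?thesis
  proof (rule eq_matI)
    fix i l assume "i < dim_row (frame_op (frame_coeff \<rho>))" "l < dim_col (frame_op (frame_coeff \<rho>))"
    then show "\<rho> $$ (i, l) = frame_op (frame_coeff \<rho>) $$ (i, l)"
      by (simp add: column row index_frame_op sum_distrib_left sum_distrib_right mult_ac)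
  qed (use rho_carrier in auto)
qed

definition state_bloch :: "real \<times> real \<times> real" where
  "state_bloch = bloch_vector (frame_coeff \<rho>)"

lemma rho_eq_frame_op_bloch: "\<rho> = frame_op (bloch state_bloch)"
proof -
  have hermitian: "cnj (frame_coeff \<rho> p q) = frame_coeff \<rho> q p" for p q
    by (rule frame_coeff_hermitian) (simp add: rho_hermitian)
  have trace: "frame_coeff \<rho> 0 0 + frame_coeff \<rho> 1 1 = 1"
    using rho_trace by (subst (asm) rho_eq_frame_op) (simp add: mtrace_frame_op)
  have "frame_op (frame_coeff \<rho>) = frame_op (bloch state_bloch)"
    unfolding state_bloch_def
    by (intro frame_op_cong bloch_bloch_vector[symmetric] hermitian trace)
  with rho_eq_frame_op show ?thesis
    by simp
qed

lemma length_corr_rho: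
  "length_corr N \<rho> = (\<Sum>j\<in>pauli_indices N. ((identity_corr j + inner (tau_corr j) state_bloch) / 2)\<^sup>2)"
  by (subst rho_eq_frame_op_bloch) (rule length_corr_frame_op_bloch)

lemma Re_mtrace_rho_square: "Re (mtrace (\<rho> * \<rho>)) = (1 + (norm state_bloch)\<^sup>2) / 2"
proof -
  have "mtrace (\<rho> * \<rho>) = (\<Sum>p<2. \<Sum>q<2. bloch state_bloch p q * bloch state_bloch q p)"
    by (subst (1 2) rho_eq_frame_op_bloch) (simp add: mtrace_frame_op_mult frame_coeff_frame_op)
  also have "\<dots> = complex_of_real ((1 + (norm state_bloch)\<^sup>2) / 2)"
    by (simp add: sum_bloch_mult_bloch power2_norm_eq_inner)
  finally show ?thesis
    by (simp only: Re_complex_of_real)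
qed

lemma norm_state_bloch_le_1: "norm state_bloch \<le> 1"
proof (cases "state_bloch = 0")
  case False
  let ?r = state_bloch
  let ?u = "- (1 / norm ?r) *\<^sub>R ?r"
  \<comment> \<open>the pure state with Bloch vector opposite to that of \<rho>\<close>
  obtain y where y: "\<And>p q. p < 2 \<Longrightarrow> q < 2 \<Longrightarrow> y p * cnj (y q) = bloch ?u p q"
    using pure_state_of_bloch[of ?u] False by auto
  have "(\<rho> *\<^sub>v frame_vec y) \<bullet>c frame_vec y = (\<Sum>p<2. \<Sum>q<2. bloch ?r p q * bloch ?u q p)"
    by (subst rho_eq_frame_op_bloch) (simp add: frame_op_quadratic_form y)
  also have "\<dots> = complex_of_real ((1 - norm ?r) / 2)"
    using False by (simp add: sum_bloch_mult_bloch power2_norm_eq_inner[symmetric] power2_eq_square)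
  finally have "Re ((\<rho> *\<^sub>v frame_vec y) \<bullet>c frame_vec y) = (1 - norm ?r) / 2"
    by (simp only: Re_complex_of_real)
  with rho_psd[OF frame_vec_carrier, of y] have "0 \<le> (1 - norm ?r) / 2"
    by simp
  then show ?thesis
    by simp
qed simp

lemma decomposition_in_span:
  fixes m :: nat
  assumes dec: "\<rho> = mat (2 ^ N) (2 ^ N) (\<lambda>(i, j). \<Sum>k<m. complex_of_real (\<mu> k) * \<Psi> k $ i * cnj (\<Psi> k $ j))"
    and pos: "\<And>k. k < m \<Longrightarrow> \<mu> k > 0" and \<Psi>: "\<And>k. k < m \<Longrightarrow> \<Psi> k \<in> carrier_vec (2 ^ N)"
    and "k0 < m"
  shows "\<Psi> k0 = frame_vec (frame_coord (\<Psi> k0))"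
proof -
  define z where "z = \<Psi> k0 - frame_vec (frame_coord (\<Psi> k0))"
  have z: "z \<in> carrier_vec (2 ^ N)"
    using \<Psi>[OF \<open>k0 < m\<close>] by (simp add: z_def)
  have z_perp: "frame_coord z q = 0" if "q < 2" for q
  proof -
    have "frame_coord z q = frame_coord (\<Psi> k0) q - frame_coord (frame_vec (frame_coord (\<Psi> k0))) q"
      using \<Psi>[OF \<open>k0 < m\<close>] by (simp add: z_def frame_coord_def right_diff_distrib sum_subtractf)
    then show ?thesis
      using that by (simp add: frame_coord_frame_vec)
  qed
  \<comment> \<open>z is orthogonal to the support of \<rho>, so it is orthogonal to every \<Psi> k\<close>
  have "(\<rho> *\<^sub>v z) \<bullet>c z = 0"
    using z by (subst rho_eq_frame_op) (simp add: frame_op_mult_vec cscalar_prod_frame_vec z_perp)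
  with dec z \<Psi> pos have "z \<bullet>c \<Psi> k0 = 0"
    using \<open>k0 < m\<close> by (rule mixture_form_zero_imp_orthogonal)
  moreover have "\<Psi> k0 \<bullet>c z = cnj (z \<bullet>c \<Psi> k0)"
    using z \<Psi>[OF \<open>k0 < m\<close>] by (simp add: cscalar_prod_eq_sum[of _ "2 ^ N"] cnj_sum mult.commute)
  ultimately have "\<Psi> k0 \<bullet>c z = 0"
    by simp
  have "z \<bullet>c z = (\<Psi> k0 - frame_vec (frame_coord (\<Psi> k0))) \<bullet>c z"
    by (simp only: z_def[symmetric])
  also have "\<dots> = \<Psi> k0 \<bullet>c z - frame_vec (frame_coord (\<Psi> k0)) \<bullet>c z"
    using z \<Psi>[OF \<open>k0 < m\<close>] by (intro minus_scalar_prod_distrib) auto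
  also have "\<dots> = 0"
    using z \<open>\<Psi> k0 \<bullet>c z = 0\<close> by (simp add: cscalar_prod_frame_vec z_perp sum_lessThan_2)
  finally have "z = 0\<^sub>v (2 ^ N)"
    using z by simp
  show ?thesis
  proof (rule eq_vecI)
    fix i assume "i < dim_vec (frame_vec (frame_coord (\<Psi> k0)))"
    moreover from this have "z $ i = 0"
      using \<open>z = 0\<^sub>v (2 ^ N)\<close> by simp
    ultimately show "\<Psi> k0 $ i = frame_vec (frame_coord (\<Psi> k0)) $ i"
      using \<Psi>[OF \<open>k0 < m\<close>] by (simp add: z_def)
  qed (use \<Psi>[OF \<open>k0 < m\<close>] in simp)
qed

lemma decomposition_bloch_vectors:
  fixes m :: nat
  assumes \<Psi>: "\<forall>k<m. \<mu> k > 0 \<and> \<Psi> k \<in> carrier_vec (2 ^ N) \<and> \<Psi> k \<bullet>c \<Psi> k = 1"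
    and \<mu>: "(\<Sum>k<m. \<mu> k) = 1"
    and dec: "\<rho> = mat (2 ^ N) (2 ^ N) (\<lambda>(i, j). \<Sum>k<m. complex_of_real (\<mu> k) * \<Psi> k $ i * cnj (\<Psi> k $ j))"
  obtains n where "\<And>k. k < m \<Longrightarrow> norm (n k) = 1"
    "\<And>k. k < m \<Longrightarrow> ketbra (\<Psi> k) (\<Psi> k) = frame_op (bloch (n k))"
    "(\<Sum>k<m. \<mu> k *\<^sub>R n k) = state_bloch"
proof -
  define y where "y k = frame_coord (\<Psi> k)" for k
  define n where "n k = bloch_vector (\<lambda>p q. y k p * cnj (y k q))" for k
  have span: "\<Psi> k = frame_vec (y k)" if "k < m" for k
    unfolding y_def using dec \<Psi> that by (intro decomposition_in_span) auto
  have unit: "y k 0 * cnj (y k 0) + y k 1 * cnj (y k 1) = 1" if "k < m" for k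
    using \<Psi> that span[OF that] frame_vec_unit by metis
  have "frame_op (bloch state_bloch) = frame_op (\<lambda>p q. \<Sum>k<m. complex_of_real (\<mu> k) * (y k p * cnj (y k q)))"
    using rho_eq_frame_op_bloch dec mixture_frame_op[OF span] by simp
  also have "\<dots> = frame_op (\<lambda>p q. \<Sum>k<m. complex_of_real (\<mu> k) * bloch (n k) p q)"
    using unit by (intro frame_op_cong sum.cong refl) (auto simp: n_def bloch_bloch_vector mult.commute)
  finally have "\<forall>p<2. \<forall>q<2. bloch state_bloch p q = (\<Sum>k<m. complex_of_real (\<mu> k) * bloch (n k) p q)"
    using frame_op_eqD by blast
  then have "(\<Sum>k<m. \<mu> k *\<^sub>R n k) = state_bloch"
    unfolding bloch_convex_iff[OF \<mu>] by simp
  moreover have "norm (n k) = 1" "ketbra (\<Psi> k) (\<Psi> k) = frame_op (bloch (n k))" if "k < m" for k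
    using span[OF that] bloch_vector_pure_norm[OF unit[OF that]] ketbra_frame_vec_bloch[OF unit[OF that]]
    by (simp_all add: n_def)
  ultimately show ?thesis
    using that by blast
qed

lemma bloch_vectors_decomposition:
  fixes m :: nat
  assumes pos: "\<And>k. k < m \<Longrightarrow> \<mu> k > 0" and \<mu>: "(\<Sum>k<m. \<mu> k) = 1"
    and unit: "\<And>k. k < m \<Longrightarrow> norm (n k) = 1" and r: "(\<Sum>k<m. \<mu> k *\<^sub>R n k) = state_bloch"
  obtains \<Psi> where "\<forall>k<m. \<mu> k > 0 \<and> \<Psi> k \<in> carrier_vec (2 ^ N) \<and> \<Psi> k \<bullet>c \<Psi> k = 1"
    "\<rho> = mat (2 ^ N) (2 ^ N) (\<lambda>(i, j). \<Sum>k<m. complex_of_real (\<mu> k) * \<Psi> k $ i * cnj (\<Psi> k $ j))"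
    "\<And>k. k < m \<Longrightarrow> ketbra (\<Psi> k) (\<Psi> k) = frame_op (bloch (n k))"
proof -
  have "\<forall>k\<in>{..<m}. \<exists>y. \<forall>p<2. \<forall>q<2. y p * cnj (y q) = bloch (n k) p q"
    using pure_state_of_bloch unit by (metis lessThan_iff)
  then obtain y where y: "\<And>k p q. k < m \<Longrightarrow> p < 2 \<Longrightarrow> q < 2 \<Longrightarrow> y k p * cnj (y k q) = bloch (n k) p q"
    using bchoice[of "{..<m}"] by (metis lessThan_iff)
  define \<Psi> where "\<Psi> k = frame_vec (y k)" for k
  have "\<Psi> k \<bullet>c \<Psi> k = 1" if "k < m" for k
    unfolding \<Psi>_def frame_vec_unit using y[OF that, of 0 0] y[OF that, of 1 1] bloch_trace[of "n k"] by simp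
  moreover have "ketbra (\<Psi> k) (\<Psi> k) = frame_op (bloch (n k))" if "k < m" for k
    unfolding \<Psi>_def ketbra_frame_vec using y[OF that] by (intro frame_op_cong) simp
  moreover have "\<rho> = mat (2 ^ N) (2 ^ N) (\<lambda>(i, j). \<Sum>k<m. complex_of_real (\<mu> k) * \<Psi> k $ i * cnj (\<Psi> k $ j))"
  proof -
    have "\<forall>p<2. \<forall>q<2. bloch state_bloch p q = (\<Sum>k<m. complex_of_real (\<mu> k) * bloch (n k) p q)"
      using r unfolding bloch_convex_iff[OF \<mu>] by simp
    then have "frame_op (bloch state_bloch) = frame_op (\<lambda>p q. \<Sum>k<m. complex_of_real (\<mu> k) * bloch (n k) p q)"
      by (intro frame_op_cong) blast
    also have "\<dots> = mat (2 ^ N) (2 ^ N) (\<lambda>(i, j). \<Sum>k<m. complex_of_real (\<mu> k) * \<Psi> k $ i * cnj (\<Psi> k $ j))"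
      by (subst mixture_frame_op[of m \<Psi> y]) (auto simp: \<Psi>_def y intro!: frame_op_cong sum.cong)
    finally show ?thesis
      using rho_eq_frame_op_bloch by simp
  qed
  ultimately show ?thesis
    using pos by (intro that[of \<Psi>]) (auto simp: \<Psi>_def)
qed

lemma average_length_corr:
  fixes m :: nat
  assumes "(\<Sum>k<m. \<mu> k) = 1" "(\<Sum>k<m. \<mu> k *\<^sub>R n k) = state_bloch"
  shows "(\<Sum>k<m. \<mu> k * length_corr N (frame_op (bloch (n k))))
    = length_corr N \<rho> + (\<Sum>k<m. \<mu> k * gram_form (pauli_indices N) tau_corr (n k - state_bloch)) / 4"
  unfolding length_corr_frame_op_bloch length_corr_rho by (rule convex_sum_squares_split[OF assms])

abbreviation w_min :: real where
  "w_min \<equiv> min_eigenvalue (W_mat N v0 v1)"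

lemma w_min_scaled_spread:
  fixes m :: nat
  assumes "(\<Sum>k<m. \<mu> k) = 1" "(\<Sum>k<m. \<mu> k *\<^sub>R n k) = state_bloch" "\<And>k. k < m \<Longrightarrow> norm (n k) = 1"
  shows "w_min * (1 - (norm state_bloch)\<^sup>2) = (\<Sum>k<m. \<mu> k * (w_min * (norm (n k - state_bloch))\<^sup>2))"
proof -
  have "w_min * (1 - (norm state_bloch)\<^sup>2) = w_min * (\<Sum>k<m. \<mu> k * (norm (n k - state_bloch))\<^sup>2)"
    by (simp only: convex_sum_dist_sphere[OF assms])
  then show ?thesis
    by (simp add: sum_distrib_left mult_ac)
qed

lemma convex_roof_lower_bound:
  fixes m :: nat
  assumes \<Psi>: "\<forall>k<m. \<mu> k > 0 \<and> \<Psi> k \<in> carrier_vec (2 ^ N) \<and> \<Psi> k \<bullet>c \<Psi> k = 1"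
    and \<mu>: "(\<Sum>k<m. \<mu> k) = 1"
    and dec: "\<rho> = mat (2 ^ N) (2 ^ N) (\<lambda>(i, j). \<Sum>k<m. complex_of_real (\<mu> k) * \<Psi> k $ i * cnj (\<Psi> k $ j))"
  shows "length_corr N \<rho> + w_min * (1 - (norm state_bloch)\<^sup>2) / 4
    \<le> (\<Sum>k<m. \<mu> k * length_corr N (ketbra (\<Psi> k) (\<Psi> k)))"
proof -
  obtain n where unit: "\<And>k. k < m \<Longrightarrow> norm (n k) = 1"
    and ketbra: "\<And>k. k < m \<Longrightarrow> ketbra (\<Psi> k) (\<Psi> k) = frame_op (bloch (n k))"
    and r: "(\<Sum>k<m. \<mu> k *\<^sub>R n k) = state_bloch"
    using decomposition_bloch_vectors[OF \<Psi> \<mu> dec] by blast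
  have "length_corr N \<rho> + w_min * (1 - (norm state_bloch)\<^sup>2) / 4
      = length_corr N \<rho> + (\<Sum>k<m. \<mu> k * (w_min * (norm (n k - state_bloch))\<^sup>2)) / 4"
    by (simp only: w_min_scaled_spread[OF \<mu> r unit])
  also have "\<dots> \<le> length_corr N \<rho> + (\<Sum>k<m. \<mu> k * gram_form (pauli_indices N) tau_corr (n k - state_bloch)) / 4"
    using \<Psi> by (auto intro!: sum_mono mult_left_mono min_eigenvalue_gram_mat_le simp: W_mat_eq_gram_mat)
  also have "\<dots> = (\<Sum>k<m. \<mu> k * length_corr N (frame_op (bloch (n k))))"
    by (rule average_length_corr[OF \<mu> r, symmetric])
  also have "\<dots> = (\<Sum>k<m. \<mu> k * length_corr N (ketbra (\<Psi> k) (\<Psi> k)))"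
    using ketbra by simp
  finally show ?thesis .
qed

lemma convex_roof_attained:
  "\<exists>m \<mu> \<Psi>. length_corr N \<rho> + w_min * (1 - (norm state_bloch)\<^sup>2) / 4
        = (\<Sum>k<(m::nat). \<mu> k * length_corr N (ketbra (\<Psi> k) (\<Psi> k)))
     \<and> (\<forall>k<m. \<mu> k > 0 \<and> \<Psi> k \<in> carrier_vec (2 ^ N) \<and> \<Psi> k \<bullet>c \<Psi> k = 1)
     \<and> (\<Sum>k<m. \<mu> k) = 1
     \<and> \<rho> = mat (2 ^ N) (2 ^ N) (\<lambda>(i, j). \<Sum>k<m. complex_of_real (\<mu> k) * \<Psi> k $ i * cnj (\<Psi> k $ j))"
proof -
  obtain e where e: "norm e = 1" "gram_form (pauli_indices N) tau_corr e = w_min"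
    using min_eigenvalue_gram_mat_attained[of "pauli_indices N" tau_corr] unfolding W_mat_eq_gram_mat by blast
  obtain \<mu> s :: "nat \<Rightarrow> real" where pos: "\<And>k. k < 2 \<Longrightarrow> \<mu> k > 0"
    and unit: "\<And>k. k < 2 \<Longrightarrow> norm (state_bloch + s k *\<^sub>R e) = 1"
    and \<mu>: "(\<Sum>k<2. \<mu> k) = 1"
    and r: "(\<Sum>k<2. \<mu> k *\<^sub>R (state_bloch + s k *\<^sub>R e)) = state_bloch"
    using two_point_decomposition[OF norm_state_bloch_le_1 e(1)] by blast
  obtain \<Psi> where \<Psi>: "\<forall>k<2. \<mu> k > 0 \<and> \<Psi> k \<in> carrier_vec (2 ^ N) \<and> \<Psi> k \<bullet>c \<Psi> k = 1"
    and dec: "\<rho> = mat (2 ^ N) (2 ^ N) (\<lambda>(i, j). \<Sum>k<2. complex_of_real (\<mu> k) * \<Psi> k $ i * cnj (\<Psi> k $ j))"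
    and ketbra: "\<And>k. k < 2 \<Longrightarrow> ketbra (\<Psi> k) (\<Psi> k) = frame_op (bloch (state_bloch + s k *\<^sub>R e))"
    using bloch_vectors_decomposition[OF pos \<mu> unit r] by blast
  \<comment> \<open>both states deviate from the Bloch vector of \<rho> along e, where the Gram form attains w_min\<close>
  have deviation: "w_min * (norm (state_bloch + s k *\<^sub>R e - state_bloch))\<^sup>2
      = gram_form (pauli_indices N) tau_corr (state_bloch + s k *\<^sub>R e - state_bloch)" for k
    using e by (simp add: gram_form_scaleR)
  have "length_corr N \<rho> + w_min * (1 - (norm state_bloch)\<^sup>2) / 4
      = length_corr N \<rho> + (\<Sum>k<2. \<mu> k * gram_form (pauli_indices N) tau_corr (state_bloch + s k *\<^sub>R e - state_bloch)) / 4"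
    by (simp only: w_min_scaled_spread[OF \<mu> r unit] deviation)
  also have "\<dots> = (\<Sum>k<2. \<mu> k * length_corr N (frame_op (bloch (state_bloch + s k *\<^sub>R e))))"
    by (rule average_length_corr[OF \<mu> r, symmetric])
  also have "\<dots> = (\<Sum>k<2. \<mu> k * length_corr N (ketbra (\<Psi> k) (\<Psi> k)))"
    using ketbra by simp
  finally show ?thesis
    using \<Psi> \<mu> dec by blast
qed

lemma convex_roof_eq: "convex_roof N \<rho> = length_corr N \<rho> + w_min * (1 - (norm state_bloch)\<^sup>2) / 4"
  unfolding convex_roof_def
proof (rule cInf_eq_minimum)
  fix x assume "x \<in> {\<Sum>k<(m::nat). \<mu> k * length_corr N (ketbra (\<Psi> k) (\<Psi> k)) |m \<mu> \<Psi>.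
      (\<forall>k<m. 0 < \<mu> k \<and> \<Psi> k \<in> carrier_vec (2 ^ N) \<and> \<Psi> k \<bullet>c \<Psi> k = 1) \<and> (\<Sum>k<m. \<mu> k) = 1 \<and>
      \<rho> = mat (2 ^ N) (2 ^ N) (\<lambda>(i, j). \<Sum>k<m. complex_of_real (\<mu> k) * \<Psi> k $ i * cnj (\<Psi> k $ j))}"
  then obtain m \<mu> \<Psi> where x: "x = (\<Sum>k<(m::nat). \<mu> k * length_corr N (ketbra (\<Psi> k) (\<Psi> k)))"
    and decomposition: "\<forall>k<m. 0 < \<mu> k \<and> \<Psi> k \<in> carrier_vec (2 ^ N) \<and> \<Psi> k \<bullet>c \<Psi> k = 1"
      "(\<Sum>k<m. \<mu> k) = 1"
      "\<rho> = mat (2 ^ N) (2 ^ N) (\<lambda>(i, j). \<Sum>k<m. complex_of_real (\<mu> k) * \<Psi> k $ i * cnj (\<Psi> k $ j))"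
    by blast
  show "length_corr N \<rho> + w_min * (1 - (norm state_bloch)\<^sup>2) / 4 \<le> x"
    unfolding x by (rule convex_roof_lower_bound[OF decomposition])
qed (use convex_roof_attained in \<open>simp only: mem_Collect_eq\<close>)

end

theorem theorem5:
  fixes N :: nat and \<rho> :: "complex mat" and v0 v1 :: "complex vec"
  assumes dens: "density_matrix N \<rho>"
    and rank2: "vec_space.rank (2 ^ N) \<rho> = 2"
    and v0: "v0 \<in> carrier_vec (2 ^ N)" and v1: "v1 \<in> carrier_vec (2 ^ N)"
    and orthonormal: "v0 \<bullet>c v0 = 1" "v1 \<bullet>c v1 = 1" "v0 \<bullet>c v1 = 0"
    and support: "{\<rho> *\<^sub>v x | x. x \<in> carrier_vec (2 ^ N)} = {a \<cdot>\<^sub>v v0 + b \<cdot>\<^sub>v v1 | a b. True}"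
  shows "convex_roof N \<rho> = length_corr N \<rho>
           + 1/2 * (1 - Re (mtrace (\<rho> * \<rho>))) * min_eigenvalue (W_mat N v0 v1)"
proof -
  \<comment> \<open>only the inclusion of the range of \<rho> in the span of v0, v1 is needed; the rank hypothesis is not\<close>
  interpret supported_state N v0 v1 \<rho>
  proof
    show "\<exists>a b. \<rho> *\<^sub>v x = a \<cdot>\<^sub>v v0 + b \<cdot>\<^sub>v v1" if "x \<in> carrier_vec (2 ^ N)" for x
      using that support by blast
  qed (use v0 v1 orthonormal dens in auto)
  show ?thesis
    by (simp add: convex_roof_eq Re_mtrace_rho_square field_simps)
qed

end
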